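(* Let $\Omega\subset\mathbb{R}^{4p}$ be a region and $F=\sum_{r=0}^{2p}F^r$ a differentiable function on $\Omega$ with components $F^r:\Omega\to\mathbb S^r$. The following are equivalent: (i) $F$ is q-monogenic; (ii) each component $F^r$ is q-monogenic; (iii) each component $F^r$ is simultaneously $\underline\partial$-monogenic and $\underline\partial_{\mathbb J}$-monogenic, i.e. $\underline\partial F^r=0$ and $\underline\partial_{\mathbb J}F^r=0$.
   Context: Coordinates on $\mathbb{R}^{4p}$: $(X_1,\dots,X_{4p})$. $\mathbb{C}_{4p}$ is the complex Clifford algebra generated by $e_1,\dots,e_{4p}$ with $e_\alpha e_\beta+e_\beta e_\alpha=-2\delta_{\alpha\beta}$. Witt basis: $\mathfrak f_k=\tfrac12(-e_{2k-1}+ie_{2k})$, $\mathfrak f_k^\dagger=\tfrac12(e_{2k-1}+ie_{2k})$, $k=1,\dots,2p$. $I=\prod_k\mathfrak f_k\mathfrak f_k^\dagger$, spinor space $\mathbb S=\mathbb C_{4p}I$ with basis $\mathfrak f^\dagger_{j_1}\cdots\mathfrak f^\dagger_{j_r}I$ ($j_1<\dots<j_r$); $\mathbb S^r$ is the span of those with $r$ factors, so $\mathbb S=\bigoplus_{r=0}^{2p}\mathbb S^r$. Real linear maps: $\mathbb{I}(e_{2k-1})=e_{2k}$, $\mathbb{I}(e_{2k})=-e_{2k-1}$; for $j=1,\dots,p$: $\mathbb{J}(e_{4j-3})=e_{4j-1}$, $\mathbb{J}(e_{4j-2})=-e_{4j}$, $\mathbb{J}(e_{4j-1})=-e_{4j-3}$,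 $\mathbb{J}(e_{4j})=e_{4j-2}$; $\mathbb K=\mathbb I\mathbb J$. $\underline\partial=\sum_\alpha e_\alpha\partial_{X_\alpha}$, $\underline\partial_M=\sum_\alpha M(e_\alpha)\partial_{X_\alpha}$ ($M\in\{\mathbb I,\mathbb J,\mathbb K\}$), acting by left multiplication. A function $G$ with values in $\mathbb S$ is q-monogenic if $\underline\partial G=\underline\partial_{\mathbb I}G=\underline\partial_{\mathbb J}G=\underline\partial_{\mathbb K}G=0$. *)

theory Defs
  imports "HOL-Analysis.Analysis"
begin

text \<open>Elements of the complex Clifford algebra C_n (n = 4p) are represented by their
coordinates with respect to the blade basis e_A = e_a1 ... e_ak (a1 < ... < ak),
A a subset of {1..n}: a map from index sets to complex coefficients.
Only subsets of {1..n} are relevant.\<close>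

type_synonym cl = "nat set \<Rightarrow> complex"

definition blades :: "nat \<Rightarrow> nat set set" where
  "blades n = Pow {1..n}"

text \<open>Sign in e_A e_B = sign A B * e_(A symmetric-difference B), using e_i e_i = -1.\<close>
definition blade_sign :: "nat set \<Rightarrow> nat set \<Rightarrow> complex" where
  "blade_sign A B = (-1) ^ card {(a, b). a \<in> A \<and> b \<in> B \<and> b < a} * (-1) ^ card (A \<inter> B)"

definition cl_mult :: "nat \<Rightarrow> cl \<Rightarrow> cl \<Rightarrow> cl" where
  "cl_mult n u v = (\<lambda>C. \<Sum>A\<in>blades n. \<Sum>B\<in>blades n.
      if (A - B) \<union> (B - A) = C then blade_sign A B * u A * v B else 0)"

definition cl_add :: "cl \<Rightarrow> cl \<Rightarrow> cl" where
  "cl_add u v = (\<lambda>A. u A + v A)"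

definition cl_scale :: "complex \<Rightarrow> cl \<Rightarrow> cl" where
  "cl_scale c u = (\<lambda>A. c * u A)"

definition cl_zero :: cl where
  "cl_zero = (\<lambda>A. 0)"

definition cl_one :: cl where
  "cl_one = (\<lambda>A. if A = {} then 1 else 0)"

definition gen :: "nat \<Rightarrow> cl" where
  "gen i = (\<lambda>A. if A = {i} then 1 else 0)"

definition cl_alg :: "nat \<Rightarrow> cl set" where
  "cl_alg n = {u. \<forall>A. A \<notin> blades n \<longrightarrow> u A = 0}"

definition cl_prod_list :: "nat \<Rightarrow> cl list \<Rightarrow> cl" where
  "cl_prod_list n xs = foldr (cl_mult n) xs cl_one"

definition witt_f :: "nat \<Rightarrow> cl" where
  "witt_f k = cl_scale (1/2) (cl_add (cl_scale (-1) (gen (2*k - 1))) (cl_scale \<i> (gen (2*k))))"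

definition witt_fd :: "nat \<Rightarrow> cl" where
  "witt_fd k = cl_scale (1/2) (cl_add (gen (2*k - 1)) (cl_scale \<i> (gen (2*k))))"

definition idemI :: "nat \<Rightarrow> cl" where
  "idemI p = cl_prod_list (4*p) (map (\<lambda>k. cl_mult (4*p) (witt_f k) (witt_fd k)) [1..<2*p+1])"

definition spinor :: "nat \<Rightarrow> cl set" where
  "spinor p = {cl_mult (4*p) a (idemI p) | a. a \<in> cl_alg (4*p)}"

definition spin_basis :: "nat \<Rightarrow> nat set \<Rightarrow> cl" where
  "spin_basis p J = cl_mult (4*p) (cl_prod_list (4*p) (map witt_fd (sorted_list_of_set J))) (idemI p)"

definition spinor_r :: "nat \<Rightarrow> nat \<Rightarrow> cl set" where
  "spinor_r p r = {(\<lambda>A. \<Sum>J\<in>{J. J \<subseteq> {1..2*p} \<and> card J = r}. c J * spin_basis p J A) | c. True}"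

text \<open>Real linear maps on the vectors of R^(4p) inside C_(4p), given on generators.\<close>
definition mapI :: "nat \<Rightarrow> cl" where
  "mapI \<alpha> = (if odd \<alpha> then gen (\<alpha> + 1) else cl_scale (-1) (gen (\<alpha> - 1)))"

definition mapJ :: "nat \<Rightarrow> cl" where
  "mapJ \<alpha> = (if \<alpha> mod 4 = 1 then gen (\<alpha> + 2)
             else if \<alpha> mod 4 = 2 then cl_scale (-1) (gen (\<alpha> + 2))
             else if \<alpha> mod 4 = 3 then cl_scale (-1) (gen (\<alpha> - 2))
             else gen (\<alpha> - 2))"

text \<open>Linear extension of a map given on generators, applied to a vector
  v = sum_beta v_beta e_beta (coefficient of e_beta is v {beta}).\<close>
definition lin_ext :: "nat \<Rightarrow> (nat \<Rightarrow> cl) \<Rightarrow> cl \<Rightarrow> cl" where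
  "lin_ext n M v = (\<lambda>A. \<Sum>\<beta>\<in>{1..n}. v {\<beta>} * M \<beta> A)"

definition mapK :: "nat \<Rightarrow> nat \<Rightarrow> cl" where
  "mapK n \<alpha> = lin_ext n mapI (mapJ \<alpha>)"

text \<open>Partial derivative d/dX_alpha of a C_n-valued function on R^n; the coordinate X_alpha
  is the component at idx alpha (idx a labelling of the coordinates by 1..n).\<close>
definition pder :: "(nat \<Rightarrow> 'n::finite) \<Rightarrow> (real^'n \<Rightarrow> cl) \<Rightarrow> nat \<Rightarrow> real^'n \<Rightarrow> cl" where
  "pder idx G \<alpha> x = (\<lambda>A. frechet_derivative (\<lambda>y. G y A) (at x) (axis (idx \<alpha>) 1))"

definition dirac :: "nat \<Rightarrow> (nat \<Rightarrow> 'n::finite) \<Rightarrow> (nat \<Rightarrow> cl) \<Rightarrow> (real^'n \<Rightarrow> cl) \<Rightarrow> real^'n \<Rightarrow> cl" where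
  "dirac n idx M G x = (\<lambda>C. \<Sum>\<alpha>\<in>{1..n}. cl_mult n (M \<alpha>) (pder idx G \<alpha> x) C)"

definition M_monogenic :: "nat \<Rightarrow> (nat \<Rightarrow> 'n::finite) \<Rightarrow> (nat \<Rightarrow> cl) \<Rightarrow> (real^'n) set \<Rightarrow> (real^'n \<Rightarrow> cl) \<Rightarrow> bool" where
  "M_monogenic n idx M \<Omega> G \<longleftrightarrow> (\<forall>x\<in>\<Omega>. dirac n idx M G x = cl_zero)"

definition q_monogenic :: "nat \<Rightarrow> (nat \<Rightarrow> 'n::finite) \<Rightarrow> (real^'n) set \<Rightarrow> (real^'n \<Rightarrow> cl) \<Rightarrow> bool" where
  "q_monogenic p idx \<Omega> G \<longleftrightarrow> (\<forall>x\<in>\<Omega>. G x \<in> spinor p)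
     \<and> M_monogenic (4*p) idx gen \<Omega> G
     \<and> M_monogenic (4*p) idx mapI \<Omega> G
     \<and> M_monogenic (4*p) idx mapJ \<Omega> G
     \<and> M_monogenic (4*p) idx (mapK (4*p)) \<Omega> G"

end

theory Submission
  imports Defs
begin

text \<open>The number operator \<open>N = \<Sum>\<^sub>k f\<^sub>k\<^sup>\<dagger> f\<^sub>k\<close> acts on \<open>S\<^sup>r\<close> as multiplication by \<open>r\<close>,
  and by the Witt relations \<open>f\<^sub>k\<^sup>\<dagger>\<close> raises and \<open>f\<^sub>k\<close> lowers its eigenvalue by one.
  Expressing \<open>e\<^sub>2\<^sub>k\<^sub>-\<^sub>1, e\<^sub>2\<^sub>k\<close> through \<open>f\<^sub>k, f\<^sub>k\<^sup>\<dagger>\<close> splits \<open>\<partial> = \<partial>\<^sup>+ - \<partial>\<^sup>-\<close> and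
  \<open>\<partial>\<^sub>I = -i(\<partial>\<^sup>+ + \<partial>\<^sup>-)\<close>, where \<open>\<partial>\<^sup>+\<close> is built from the \<open>f\<^sub>k\<^sup>\<dagger>\<close> and \<open>\<partial>\<^sup>-\<close> from the \<open>f\<^sub>k\<close>;
  after the orthogonal change of variables given by J the pair \<open>\<partial>\<^sub>J, \<partial>\<^sub>K\<close> splits in the
  same way. Hence \<open>\<partial>G = \<partial>\<^sub>IG = 0\<close> means \<open>\<partial>\<^sup>+G = \<partial>\<^sup>-G = 0\<close>. For \<open>G\<close> with values
  in \<open>S\<^sup>r\<close>, \<open>\<partial>\<^sup>+G\<close> and \<open>\<partial>\<^sup>-G\<close> are eigenvectors of \<open>N\<close> for the distinct eigenvalues
  \<open>r \<pm> 1\<close>, so \<open>\<partial>G = 0\<close> alone forces both to vanish; and since eigenvectors for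
  distinct eigenvalues are independent, these conditions for \<open>F\<close> decouple into those
  for its components. The components are differentiable because each of them is a
  fixed Lagrange interpolation polynomial in \<open>N\<close> applied to \<open>F\<close>.\<close>

section \<open>Clifford multiplication\<close>

text \<open>A pair \<open>(a, b)\<close> contributes a transposition to \<open>e\<^sub>A e\<^sub>B\<close> if \<open>b < a\<close> and a
  square \<open>e\<^sub>a\<^sup>2 = -1\<close> if \<open>a = b\<close>.\<close>
definition pair_sign :: "nat \<Rightarrow> nat \<Rightarrow> complex" where
  "pair_sign a b = (if b \<le> a then -1 else 1)"

lemma neg_one_power_card_filter:
  assumes "finite S"
  shows "(-1::complex) ^ card {x \<in> S. P x} = (\<Prod>x\<in>S. if P x then -1 else 1)"
  using prod.inter_filter[OF assms, of "\<lambda>_. -1" P] by simp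

lemma blade_sign_eq_prod:
  assumes "finite A" "finite B"
  shows "blade_sign A B = (\<Prod>a\<in>A. \<Prod>b\<in>B. pair_sign a b)"
proof -
  have inversions: "(-1::complex) ^ card {(a, b). a \<in> A \<and> b \<in> B \<and> b < a}
      = (\<Prod>a\<in>A. \<Prod>b\<in>B. if b < a then -1 else 1)"
  proof -
    have "{(a, b). a \<in> A \<and> b \<in> B \<and> b < a} = {q \<in> A \<times> B. snd q < fst q}" by auto
    then show ?thesis using assms
      by (simp add: neg_one_power_card_filter prod.cartesian_product case_prod_beta')
  qed
  have squares: "(-1::complex) ^ card (A \<inter> B) = (\<Prod>a\<in>A. \<Prod>b\<in>B. if a = b then -1 else 1)"
    using assms neg_one_power_card_filter[of A "\<lambda>a. a \<in> B"]
    by (simp add: prod.delta Int_def)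
  have "pair_sign a b = (if b < a then -1 else 1) * (if a = b then -1 else 1)" for a b
    by (auto simp: pair_sign_def)
  then show ?thesis
    unfolding blade_sign_def inversions squares by (simp add: prod.distrib)
qed

lemma prod_symdiff_involution:
  fixes g :: "nat \<Rightarrow> complex"
  assumes "finite A" "finite B" "\<And>x. g x * g x = 1"
  shows "prod g ((A - B) \<union> (B - A)) = prod g A * prod g B"
proof -
  have A: "prod g A = prod g (A - B) * prod g (A \<inter> B)"
    using assms by (subst prod.union_disjoint[symmetric]) (auto intro: prod.cong)
  have B: "prod g B = prod g (B - A) * prod g (A \<inter> B)"
    using assms by (subst prod.union_disjoint[symmetric]) (auto intro: prod.cong)
  have "prod g ((A - B) \<union> (B - A)) = prod g (A - B) * prod g (B - A)"
    using assms by (intro prod.union_disjoint) auto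
  moreover have "prod g (A \<inter> B) * prod g (A \<inter> B) = 1"
    using assms by (simp add: prod.distrib[symmetric])
  ultimately show ?thesis
    unfolding A B by (metis (no_types, lifting) mult.assoc mult.commute mult.left_neutral)
qed

lemma pair_sign_square: "pair_sign a b * pair_sign a b = 1"
  by (simp add: pair_sign_def)

lemma blade_sign_symdiff_left:
  assumes "finite A" "finite B" "finite D"
  shows "blade_sign ((A - B) \<union> (B - A)) D = blade_sign A D * blade_sign B D"
  using assms by (simp add: blade_sign_eq_prod prod_symdiff_involution prod.distrib[symmetric]
      pair_sign_square)

lemma blade_sign_symdiff_right:
  assumes "finite A" "finite B" "finite D"
  shows "blade_sign A ((B - D) \<union> (D - B)) = blade_sign A B * blade_sign A D"
  using assms by (simp add: blade_sign_eq_prod prod_symdiff_involution pair_sign_square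
      prod.distrib[symmetric])

lemma sum_rotate3:
  "(\<Sum>x\<in>X. \<Sum>y\<in>Y. \<Sum>z\<in>Z. g x y z) = (\<Sum>y\<in>Y. \<Sum>z\<in>Z. \<Sum>x\<in>X. g x y z)"
  by (subst sum.swap) (rule sum.cong[OF refl], rule sum.swap)

lemma sum_reorder4:
  "(\<Sum>c\<in>C. \<Sum>d\<in>D. \<Sum>a\<in>A. \<Sum>b\<in>B. f c d a b) = (\<Sum>a\<in>A. \<Sum>b\<in>B. \<Sum>d\<in>D. \<Sum>c\<in>C. f c d a b)"
proof -
  have "(\<Sum>c\<in>C. \<Sum>d\<in>D. \<Sum>a\<in>A. \<Sum>b\<in>B. f c d a b) = (\<Sum>a\<in>A. \<Sum>b\<in>B. \<Sum>c\<in>C. \<Sum>d\<in>D. f c d a b)"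
    by (simp only: sum_rotate3[of _ D] sum_rotate3[of _ C])
  also have "\<dots> = (\<Sum>a\<in>A. \<Sum>b\<in>B. \<Sum>d\<in>D. \<Sum>c\<in>C. f c d a b)"
    by (rule sum.cong[OF refl], rule sum.cong[OF refl], rule sum.swap)
  finally show ?thesis .
qed

lemma if_mult_sum_sum_left:
  "(if c then k * (\<Sum>a\<in>X. \<Sum>b\<in>Y. if p a b then g a b else 0) * w else (0::complex)) =
   (\<Sum>a\<in>X. \<Sum>b\<in>Y. if p a b then (if c then k * g a b * w else 0) else 0)"
  by (cases c) (auto simp: sum_distrib_left sum_distrib_right cong: if_cong intro!: sum.cong)

lemma if_mult_sum_sum_right:
  "(if c then k * u * (\<Sum>a\<in>X. \<Sum>b\<in>Y. if p a b then g a b else 0) else (0::complex)) =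
   (\<Sum>a\<in>X. \<Sum>b\<in>Y. if p a b then (if c then k * u * g a b else 0) else 0)"
  by (cases c) (auto simp: sum_distrib_left sum_distrib_right cong: if_cong intro!: sum.cong)

lemma finite_blades [simp]: "finite (blades n)"
  by (simp add: blades_def)

lemma finite_blade: "A \<in> blades n \<Longrightarrow> finite A"
  by (auto simp: blades_def intro: finite_subset)

lemma symdiff_in_blades: "A \<in> blades n \<Longrightarrow> B \<in> blades n \<Longrightarrow> (A - B) \<union> (B - A) \<in> blades n"
  by (auto simp: blades_def)

lemma cl_mult_assoc: "cl_mult n (cl_mult n u v) w = cl_mult n u (cl_mult n v w)"
proof (rule ext)
  fix E
  let ?P = "blades n"
  let ?sd = "\<lambda>A B. (A - B) \<union> (B - A)"
  have L: "cl_mult n (cl_mult n u v) w E = (\<Sum>A\<in>?P. \<Sum>B\<in>?P. \<Sum>D\<in>?P.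
      if ?sd (?sd A B) D = E then blade_sign (?sd A B) D * (blade_sign A B * u A * v B) * w D else 0)"
  proof -
    have "cl_mult n (cl_mult n u v) w E = (\<Sum>C\<in>?P. \<Sum>D\<in>?P. \<Sum>A\<in>?P. \<Sum>B\<in>?P.
       if ?sd A B = C then (if ?sd C D = E then blade_sign C D * (blade_sign A B * u A * v B) * w D else 0) else 0)"
      unfolding cl_mult_def by (simp only: if_mult_sum_sum_left)
    also have "\<dots> = (\<Sum>A\<in>?P. \<Sum>B\<in>?P. \<Sum>D\<in>?P. \<Sum>C\<in>?P.
       if ?sd A B = C then (if ?sd C D = E then blade_sign C D * (blade_sign A B * u A * v B) * w D else 0) else 0)"
      by (rule sum_reorder4)
    also have "\<dots> = (\<Sum>A\<in>?P. \<Sum>B\<in>?P. \<Sum>D\<in>?P.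
      if ?sd (?sd A B) D = E then blade_sign (?sd A B) D * (blade_sign A B * u A * v B) * w D else 0)"
      by (intro sum.cong refl) (simp add: sum.delta' symdiff_in_blades)
    finally show ?thesis .
  qed
  have R: "cl_mult n u (cl_mult n v w) E = (\<Sum>A\<in>?P. \<Sum>B\<in>?P. \<Sum>D\<in>?P.
      if ?sd A (?sd B D) = E then blade_sign A (?sd B D) * u A * (blade_sign B D * v B * w D) else 0)"
  proof -
    have "cl_mult n u (cl_mult n v w) E = (\<Sum>A\<in>?P. \<Sum>X\<in>?P. \<Sum>B\<in>?P. \<Sum>D\<in>?P.
       if ?sd B D = X then (if ?sd A X = E then blade_sign A X * u A * (blade_sign B D * v B * w D) else 0) else 0)"
      unfolding cl_mult_def by (simp only: if_mult_sum_sum_right)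
    also have "\<dots> = (\<Sum>A\<in>?P. \<Sum>B\<in>?P. \<Sum>D\<in>?P. \<Sum>X\<in>?P.
       if ?sd B D = X then (if ?sd A X = E then blade_sign A X * u A * (blade_sign B D * v B * w D) else 0) else 0)"
      by (rule sum.cong[OF refl], rule sum_rotate3)
    also have "\<dots> = (\<Sum>A\<in>?P. \<Sum>B\<in>?P. \<Sum>D\<in>?P.
      if ?sd A (?sd B D) = E then blade_sign A (?sd B D) * u A * (blade_sign B D * v B * w D) else 0)"
      by (intro sum.cong refl) (simp add: sum.delta' symdiff_in_blades)
    finally show ?thesis .
  qed
  have "?sd (?sd A B) D = ?sd A (?sd B D)" for A B D :: "nat set"
    by auto
  moreover have "blade_sign A B * blade_sign (?sd A B) D = blade_sign B D * blade_sign A (?sd B D)"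
    if "A \<in> ?P" "B \<in> ?P" "D \<in> ?P" for A B D
    using that by (simp add: finite_blade blade_sign_symdiff_left blade_sign_symdiff_right)
  ultimately show "cl_mult n (cl_mult n u v) w E = cl_mult n u (cl_mult n v w) E"
    unfolding L R by (intro sum.cong refl) (simp add: algebra_simps)
qed

lemma cl_mult_in_alg: "cl_mult n u v \<in> cl_alg n"
  unfolding cl_alg_def cl_mult_def using symdiff_in_blades
  by (auto intro!: sum.neutral)

lemma cl_one_in_alg: "cl_one \<in> cl_alg n"
  by (auto simp: cl_alg_def cl_one_def blades_def)

lemma cl_lincomb_in_alg:
  assumes "finite I" "\<And>i. i \<in> I \<Longrightarrow> u i \<in> cl_alg n"
  shows "(\<lambda>A. \<Sum>i\<in>I. c i * u i A) \<in> cl_alg n"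
  using assms by (auto simp: cl_alg_def intro!: sum.neutral)

lemma cl_prod_in_alg: "foldr (cl_mult n) xs cl_one \<in> cl_alg n"
  by (cases xs) (simp_all add: cl_one_in_alg cl_mult_in_alg)

lemma blade_sign_empty_left [simp]: "blade_sign {} B = 1"
  by (simp add: blade_sign_def)

lemma cl_mult_one_left: "u \<in> cl_alg n \<Longrightarrow> cl_mult n cl_one u = u"
proof (rule ext)
  fix C assume u: "u \<in> cl_alg n"
  have "cl_mult n cl_one u C = (\<Sum>A\<in>blades n. if A = {} then
      (\<Sum>B\<in>blades n. if (A - B) \<union> (B - A) = C then blade_sign A B * u B else 0) else 0)"
    unfolding cl_mult_def cl_one_def by (intro sum.cong refl) (auto intro!: sum.cong cong: if_cong)
  also have "\<dots> = (\<Sum>B\<in>blades n. if B = C then u B else 0)"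
    by (simp add: sum.delta blades_def)
  also have "\<dots> = u C" using u by (auto simp: sum.delta cl_alg_def)
  finally show "cl_mult n cl_one u C = u C" .
qed

lemma cl_mult_lincomb_left:
  assumes "finite I"
  shows "cl_mult n (\<lambda>A. \<Sum>i\<in>I. c i * u i A) w = (\<lambda>C. \<Sum>i\<in>I. c i * cl_mult n (u i) w C)"
proof (rule ext)
  fix C
  let ?P = "blades n"
  have "cl_mult n (\<lambda>A. \<Sum>i\<in>I. c i * u i A) w C =
     (\<Sum>A\<in>?P. \<Sum>B\<in>?P. \<Sum>i\<in>I. c i * (if (A - B) \<union> (B - A) = C then blade_sign A B * u i A * w B else 0))"
    unfolding cl_mult_def
    by (intro sum.cong refl) (simp add: sum_distrib_left sum_distrib_right algebra_simps)
  also have "\<dots> = (\<Sum>i\<in>I. c i * cl_mult n (u i) w C)"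
    unfolding cl_mult_def by (simp add: sum_distrib_left sum_rotate3[where X = ?P])
  finally show "cl_mult n (\<lambda>A. \<Sum>i\<in>I. c i * u i A) w C = (\<Sum>i\<in>I. c i * cl_mult n (u i) w C)" .
qed

lemma cl_mult_lincomb_right:
  assumes "finite I"
  shows "cl_mult n w (\<lambda>A. \<Sum>i\<in>I. c i * u i A) = (\<lambda>C. \<Sum>i\<in>I. c i * cl_mult n w (u i) C)"
proof (rule ext)
  fix C
  let ?P = "blades n"
  have "cl_mult n w (\<lambda>A. \<Sum>i\<in>I. c i * u i A) C =
     (\<Sum>A\<in>?P. \<Sum>B\<in>?P. \<Sum>i\<in>I. c i * (if (A - B) \<union> (B - A) = C then blade_sign A B * w A * u i B else 0))"
    unfolding cl_mult_def
    by (intro sum.cong refl) (simp add: sum_distrib_left sum_distrib_right algebra_simps)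
  also have "\<dots> = (\<Sum>i\<in>I. c i * cl_mult n w (u i) C)"
    unfolding cl_mult_def by (simp add: sum_distrib_left sum_rotate3[where X = ?P])
  finally show "cl_mult n w (\<lambda>A. \<Sum>i\<in>I. c i * u i A) C = (\<Sum>i\<in>I. c i * cl_mult n w (u i) C)" .
qed

lemma cl_mult_sum_left:
  "finite I \<Longrightarrow> cl_mult n (\<lambda>A. \<Sum>i\<in>I. u i A) w = (\<lambda>C. \<Sum>i\<in>I. cl_mult n (u i) w C)"
  using cl_mult_lincomb_left[of I n "\<lambda>i. 1" u w] by simp

lemma cl_mult_sum_right:
  "finite I \<Longrightarrow> cl_mult n w (\<lambda>A. \<Sum>i\<in>I. u i A) = (\<lambda>C. \<Sum>i\<in>I. cl_mult n w (u i) C)"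
  using cl_mult_lincomb_right[of I n w "\<lambda>i. 1" u] by simp

lemma cl_mult_add_left: "cl_mult n (\<lambda>A. u A + v A) w = (\<lambda>C. cl_mult n u w C + cl_mult n v w C)"
  unfolding cl_mult_def by (auto simp: sum.distrib[symmetric] algebra_simps intro!: sum.cong)

lemma cl_mult_add_right: "cl_mult n w (\<lambda>A. u A + v A) = (\<lambda>C. cl_mult n w u C + cl_mult n w v C)"
  unfolding cl_mult_def by (auto simp: sum.distrib[symmetric] algebra_simps intro!: sum.cong)

lemma cl_mult_diff_left: "cl_mult n (\<lambda>A. u A - v A) w = (\<lambda>C. cl_mult n u w C - cl_mult n v w C)"
  unfolding cl_mult_def by (auto simp: sum_subtractf[symmetric] algebra_simps intro!: sum.cong)

lemma cl_mult_diff_right: "cl_mult n w (\<lambda>A. u A - v A) = (\<lambda>C. cl_mult n w u C - cl_mult n w v C)"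
  unfolding cl_mult_def by (auto simp: sum_subtractf[symmetric] algebra_simps intro!: sum.cong)

lemma cl_mult_scale_left: "cl_mult n (\<lambda>A. c * u A) w = (\<lambda>C. c * cl_mult n u w C)"
  unfolding cl_mult_def by (auto simp: sum_distrib_left algebra_simps intro!: sum.cong)

lemma cl_mult_scale_right: "cl_mult n w (\<lambda>A. c * u A) = (\<lambda>C. c * cl_mult n w u C)"
  unfolding cl_mult_def by (auto simp: sum_distrib_left algebra_simps intro!: sum.cong)

lemma cl_mult_zero_right: "cl_mult n w (\<lambda>A. 0) = (\<lambda>C. 0)"
  unfolding cl_mult_def by (auto cong: if_cong)

definition cl_vector :: "nat \<Rightarrow> (nat \<Rightarrow> complex) \<Rightarrow> cl" where
  "cl_vector n c = (\<lambda>A. \<Sum>a\<in>{1..n}. c a * gen a A)"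

lemma cl_mult_gen_gen:
  assumes "a \<in> {1..n}" "b \<in> {1..n}"
  shows "cl_mult n (gen a) (gen b) =
    (\<lambda>C. if ({a} - {b}) \<union> ({b} - {a}) = C then blade_sign {a} {b} else 0)"
proof (rule ext)
  fix C
  have "cl_mult n (gen a) (gen b) C = (\<Sum>A\<in>blades n. \<Sum>B\<in>blades n. if B = {b} then (if A = {a} then
      (if ({a} - {b}) \<union> ({b} - {a}) = C then blade_sign {a} {b} else 0) else 0) else 0)"
    unfolding cl_mult_def by (intro sum.cong refl) (simp add: gen_def)
  also have "\<dots> = (if ({a} - {b}) \<union> ({b} - {a}) = C then blade_sign {a} {b} else 0)"
    using assms by (simp add: sum.delta blades_def)
  finally show "cl_mult n (gen a) (gen b) C =
      (if ({a} - {b}) \<union> ({b} - {a}) = C then blade_sign {a} {b} else 0)" .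
qed

lemma blade_sign_singletons:
  "blade_sign {a} {b} = (if b < a then -1 else 1) * (if a = b then -1 else 1)"
proof -
  have "{(x, y). x \<in> {a} \<and> y \<in> {b} \<and> y < x} = (if b < a then {(a, b)} else {})" by auto
  then show ?thesis unfolding blade_sign_def by auto
qed

lemma gen_anticomm:
  assumes "a \<in> {1..n}" "b \<in> {1..n}"
  shows "cl_mult n (gen a) (gen b) C + cl_mult n (gen b) (gen a) C = (if a = b then -2 else 0) * cl_one C"
proof (cases "a = b")
  case True
  then show ?thesis using assms by (simp add: cl_mult_gen_gen blade_sign_singletons cl_one_def)
next
  case False
  have "blade_sign {a} {b} + blade_sign {b} {a} = 0"
    using False by (auto simp: blade_sign_singletons)
  then show ?thesis
    using assms False by (simp add: cl_mult_gen_gen cl_one_def insert_commute Un_commute)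
qed

lemma cl_vector_anticomm:
  "cl_mult n (cl_vector n c) (cl_vector n d) C + cl_mult n (cl_vector n d) (cl_vector n c) C
   = -2 * (\<Sum>a\<in>{1..n}. c a * d a) * cl_one C"
proof -
  let ?m = "\<lambda>a b. cl_mult n (gen a) (gen b) C"
  have expand: "cl_mult n (cl_vector n c) (cl_vector n d) C = (\<Sum>a\<in>{1..n}. \<Sum>b\<in>{1..n}. c a * d b * ?m a b)"
    for c d
    unfolding cl_vector_def by (simp add: cl_mult_lincomb_left cl_mult_lincomb_right
        sum_distrib_left algebra_simps)
  have "cl_mult n (cl_vector n c) (cl_vector n d) C + cl_mult n (cl_vector n d) (cl_vector n c) C
     = (\<Sum>a\<in>{1..n}. \<Sum>b\<in>{1..n}. c a * d b * (?m a b + ?m b a))"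
    unfolding expand by (subst (2) sum.swap) (simp add: sum.distrib[symmetric] algebra_simps)
  also have "\<dots> = (\<Sum>a\<in>{1..n}. \<Sum>b\<in>{1..n}. if a = b then c a * d b * (-2 * cl_one C) else 0)"
    by (intro sum.cong refl) (simp add: gen_anticomm)
  also have "\<dots> = (\<Sum>a\<in>{1..n}. c a * d a * (-2 * cl_one C))"
    by (simp add: sum.delta)
  also have "\<dots> = -2 * (\<Sum>a\<in>{1..n}. c a * d a) * cl_one C"
    by (simp only: sum_distrib_right[symmetric]) (simp add: algebra_simps)
  finally show ?thesis .
qed

lemma cl_vector_anticomm_mult:
  assumes w: "w \<in> cl_alg n"
  shows "cl_mult n (cl_vector n c) (cl_mult n (cl_vector n d) w) =
     (\<lambda>C. -2 * (\<Sum>a\<in>{1..n}. c a * d a) * w C - cl_mult n (cl_vector n d) (cl_mult n (cl_vector n c) w) C)"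
proof -
  let ?k = "-2 * (\<Sum>a\<in>{1..n}. c a * d a)"
  have "cl_mult n (\<lambda>C. cl_mult n (cl_vector n c) (cl_vector n d) C + cl_mult n (cl_vector n d) (cl_vector n c) C) w
     = cl_mult n (\<lambda>C. ?k * cl_one C) w"
    by (simp only: cl_vector_anticomm)
  then have "(\<lambda>C. cl_mult n (cl_vector n c) (cl_mult n (cl_vector n d) w) C
      + cl_mult n (cl_vector n d) (cl_mult n (cl_vector n c) w) C) = (\<lambda>C. ?k * w C)"
    by (simp only: cl_mult_add_left cl_mult_assoc cl_mult_scale_left cl_mult_one_left[OF w])
  then show ?thesis by (auto simp: fun_eq_iff algebra_simps dest: fun_cong)
qed

section \<open>The Witt basis and the number operator\<close>

definition witt_f_coeff :: "nat \<Rightarrow> nat \<Rightarrow> complex" where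
  "witt_f_coeff k a = (if a = 2*k-1 then -1/2 else 0) + (if a = 2*k then \<i>/2 else 0)"

definition witt_fd_coeff :: "nat \<Rightarrow> nat \<Rightarrow> complex" where
  "witt_fd_coeff k a = (if a = 2*k-1 then 1/2 else 0) + (if a = 2*k then \<i>/2 else 0)"

lemma sum_two_points:
  fixes g :: "nat \<Rightarrow> complex"
  assumes "finite S" "x1 \<in> S" "x2 \<in> S" "x1 \<noteq> x2"
  shows "(\<Sum>a\<in>S. ((if a = x1 then \<alpha> else 0) + (if a = x2 then \<beta> else 0)) * g a) = \<alpha> * g x1 + \<beta> * g x2"
proof -
  have "(\<Sum>a\<in>S. ((if a = x1 then \<alpha> else 0) + (if a = x2 then \<beta> else 0)) * g a)
     = (\<Sum>a\<in>S. (if a = x1 then \<alpha> * g a else 0)) + (\<Sum>a\<in>S. (if a = x2 then \<beta> * g a else 0))"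
    by (simp add: sum.distrib[symmetric], intro sum.cong) (auto simp: distrib_right)
  also have "\<dots> = \<alpha> * g x1 + \<beta> * g x2" using assms by (simp add: sum.delta)
  finally show ?thesis .
qed

lemma witt_f_eq_cl_vector:
  assumes "1 \<le> k" "2*k \<le> n"
  shows "witt_f k = cl_vector n (witt_f_coeff k)"
proof (rule ext)
  fix A
  have "cl_vector n (witt_f_coeff k) A = (-1/2) * gen (2*k-1) A + (\<i>/2) * gen (2*k) A"
    unfolding cl_vector_def witt_f_coeff_def using assms by (subst sum_two_points) auto
  then show "witt_f k A = cl_vector n (witt_f_coeff k) A"
    by (simp add: witt_f_def cl_scale_def cl_add_def algebra_simps)
qed

lemma witt_fd_eq_cl_vector:
  assumes "1 \<le> k" "2*k \<le> n"
  shows "witt_fd k = cl_vector n (witt_fd_coeff k)"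
proof (rule ext)
  fix A
  have "cl_vector n (witt_fd_coeff k) A = (1/2) * gen (2*k-1) A + (\<i>/2) * gen (2*k) A"
    unfolding cl_vector_def witt_fd_coeff_def using assms by (subst sum_two_points) auto
  then show "witt_fd k A = cl_vector n (witt_fd_coeff k) A"
    by (simp add: witt_fd_def cl_scale_def cl_add_def algebra_simps)
qed

lemma witt_coeff_values:
  assumes "1 \<le> j" "1 \<le> k"
  shows "witt_f_coeff j (2*k-1) = (if j = k then -1/2 else 0)"
    "witt_f_coeff j (2*k) = (if j = k then \<i>/2 else 0)"
    "witt_fd_coeff j (2*k-1) = (if j = k then 1/2 else 0)"
    "witt_fd_coeff j (2*k) = (if j = k then \<i>/2 else 0)"
proof -
  have "(2*k-1 = 2*j-1) = (j = k)" "(2*k = 2*j) = (j = k)" "2*k-1 \<noteq> 2*j" "2*k \<noteq> 2*j-1"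
    using assms by arith+
  then show "witt_f_coeff j (2*k-1) = (if j = k then -1/2 else 0)"
    "witt_f_coeff j (2*k) = (if j = k then \<i>/2 else 0)"
    "witt_fd_coeff j (2*k-1) = (if j = k then 1/2 else 0)"
    "witt_fd_coeff j (2*k) = (if j = k then \<i>/2 else 0)"
    by (simp_all add: witt_f_coeff_def witt_fd_coeff_def)
qed

lemma witt_coeff_pairings:
  assumes "1 \<le> j" "1 \<le> k" "2*k \<le> n"
  shows "(\<Sum>a\<in>{1..n}. witt_f_coeff j a * witt_f_coeff k a) = 0"
    "(\<Sum>a\<in>{1..n}. witt_fd_coeff j a * witt_fd_coeff k a) = 0"
    "(\<Sum>a\<in>{1..n}. witt_f_coeff j a * witt_fd_coeff k a) = (if j = k then -1/2 else 0)"
    "(\<Sum>a\<in>{1..n}. witt_fd_coeff j a * witt_f_coeff k a) = (if j = k then -1/2 else 0)"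
proof -
  have eval: "(\<Sum>a\<in>{1..n}. g a * witt_f_coeff k a) = (-1/2) * g (2*k-1) + (\<i>/2) * g (2*k)"
    "(\<Sum>a\<in>{1..n}. g a * witt_fd_coeff k a) = (1/2) * g (2*k-1) + (\<i>/2) * g (2*k)" for g
    unfolding witt_f_coeff_def witt_fd_coeff_def mult.commute[of "g _"]
    using assms by (subst sum_two_points; auto)+
  show "(\<Sum>a\<in>{1..n}. witt_f_coeff j a * witt_f_coeff k a) = 0"
    "(\<Sum>a\<in>{1..n}. witt_fd_coeff j a * witt_fd_coeff k a) = 0"
    "(\<Sum>a\<in>{1..n}. witt_f_coeff j a * witt_fd_coeff k a) = (if j = k then -1/2 else 0)"
    "(\<Sum>a\<in>{1..n}. witt_fd_coeff j a * witt_f_coeff k a) = (if j = k then -1/2 else 0)"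
    unfolding eval witt_coeff_values[OF assms(1,2)] by (simp_all add: algebra_simps)
qed

locale witt_setting =
  fixes n m :: nat
  assumes witt_dim: "2*m \<le> n"
begin

lemma witt_vectors:
  assumes "k \<in> {1..m}"
  shows "witt_f k = cl_vector n (witt_f_coeff k)" "witt_fd k = cl_vector n (witt_fd_coeff k)"
  using assms witt_dim by (auto intro: witt_f_eq_cl_vector witt_fd_eq_cl_vector)

lemma witt_f_anticomm:
  assumes "j \<in> {1..m}" "k \<in> {1..m}" "w \<in> cl_alg n"
  shows "cl_mult n (witt_f j) (cl_mult n (witt_f k) w) = (\<lambda>C. - cl_mult n (witt_f k) (cl_mult n (witt_f j) w) C)"
  using cl_vector_anticomm_mult[OF assms(3), of "witt_f_coeff j" "witt_f_coeff k"]
    witt_coeff_pairings(1)[of j k n] assms witt_dim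
  by (simp add: witt_vectors)

lemma witt_fd_anticomm:
  assumes "j \<in> {1..m}" "k \<in> {1..m}" "w \<in> cl_alg n"
  shows "cl_mult n (witt_fd j) (cl_mult n (witt_fd k) w) = (\<lambda>C. - cl_mult n (witt_fd k) (cl_mult n (witt_fd j) w) C)"
  using cl_vector_anticomm_mult[OF assms(3), of "witt_fd_coeff j" "witt_fd_coeff k"]
    witt_coeff_pairings(2)[of j k n] assms witt_dim
  by (simp add: witt_vectors)

lemma witt_f_fd_anticomm:
  assumes "j \<in> {1..m}" "k \<in> {1..m}" "w \<in> cl_alg n"
  shows "cl_mult n (witt_f j) (cl_mult n (witt_fd k) w) =
    (\<lambda>C. (if j = k then 1 else 0) * w C - cl_mult n (witt_fd k) (cl_mult n (witt_f j) w) C)"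
  using cl_vector_anticomm_mult[OF assms(3), of "witt_f_coeff j" "witt_fd_coeff k"]
    witt_coeff_pairings(3)[of j k n] assms witt_dim
  by (simp add: witt_vectors)

lemma witt_fd_f_anticomm:
  assumes "j \<in> {1..m}" "k \<in> {1..m}" "w \<in> cl_alg n"
  shows "cl_mult n (witt_fd j) (cl_mult n (witt_f k) w) =
    (\<lambda>C. (if j = k then 1 else 0) * w C - cl_mult n (witt_f k) (cl_mult n (witt_fd j) w) C)"
  using cl_vector_anticomm_mult[OF assms(3), of "witt_fd_coeff j" "witt_f_coeff k"]
    witt_coeff_pairings(4)[of j k n] assms witt_dim
  by (simp add: witt_vectors)

lemma witt_f_square:
  assumes "k \<in> {1..m}" "w \<in> cl_alg n"
  shows "cl_mult n (witt_f k) (cl_mult n (witt_f k) w) = (\<lambda>C. 0)"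
  using witt_f_anticomm[OF assms(1) assms(1) assms(2)] by (auto simp: fun_eq_iff dest: fun_cong)

definition number_op :: cl where
  "number_op = (\<lambda>A. \<Sum>k\<in>{1..m}. cl_mult n (witt_fd k) (witt_f k) A)"

definition num_eigen :: "complex \<Rightarrow> cl \<Rightarrow> bool" where
  "num_eigen r w \<longleftrightarrow> w \<in> cl_alg n \<and> cl_mult n number_op w = (\<lambda>C. r * w C)"

lemma cl_mult_number_op:
  "cl_mult n number_op w = (\<lambda>C. \<Sum>k\<in>{1..m}. cl_mult n (witt_fd k) (cl_mult n (witt_f k) w) C)"
  unfolding number_op_def by (simp add: cl_mult_sum_left cl_mult_assoc)

lemma num_eigen_witt_fd:
  assumes k: "k \<in> {1..m}" and e: "num_eigen r w"
  shows "num_eigen (r + 1) (cl_mult n (witt_fd k) w)"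
  unfolding num_eigen_def
proof (intro conjI cl_mult_in_alg ext)
  fix C
  have w: "w \<in> cl_alg n" and N: "cl_mult n number_op w = (\<lambda>C. r * w C)"
    using e by (auto simp: num_eigen_def)
  have commute: "cl_mult n (witt_fd j) (cl_mult n (witt_f j) (cl_mult n (witt_fd k) w)) C
     = (if j = k then cl_mult n (witt_fd j) w C else 0)
       + cl_mult n (witt_fd k) (cl_mult n (witt_fd j) (cl_mult n (witt_f j) w)) C"
    if j: "j \<in> {1..m}" for j
    by (simp add: witt_f_fd_anticomm[OF j k w] cl_mult_diff_right cl_mult_scale_right
        witt_fd_anticomm[OF j k cl_mult_in_alg])
  have "cl_mult n number_op (cl_mult n (witt_fd k) w) C
      = cl_mult n (witt_fd k) w C
        + (\<Sum>j\<in>{1..m}. cl_mult n (witt_fd k) (cl_mult n (witt_fd j) (cl_mult n (witt_f j) w)) C)"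
    using k by (simp add: cl_mult_number_op commute sum.distrib sum.delta)
  also have "(\<Sum>j\<in>{1..m}. cl_mult n (witt_fd k) (cl_mult n (witt_fd j) (cl_mult n (witt_f j) w)) C)
      = cl_mult n (witt_fd k) (cl_mult n number_op w) C"
    unfolding cl_mult_number_op by (simp add: cl_mult_sum_right)
  also have "\<dots> = r * cl_mult n (witt_fd k) w C"
    by (simp add: N cl_mult_scale_right)
  finally show "cl_mult n number_op (cl_mult n (witt_fd k) w) C = (r + 1) * cl_mult n (witt_fd k) w C"
    by (simp add: algebra_simps)
qed

lemma num_eigen_witt_f:
  assumes k: "k \<in> {1..m}" and e: "num_eigen r w"
  shows "num_eigen (r - 1) (cl_mult n (witt_f k) w)"
  unfolding num_eigen_def
proof (intro conjI cl_mult_in_alg ext)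
  fix C
  have w: "w \<in> cl_alg n" and N: "cl_mult n number_op w = (\<lambda>C. r * w C)"
    using e by (auto simp: num_eigen_def)
  have commute: "cl_mult n (witt_fd j) (cl_mult n (witt_f j) (cl_mult n (witt_f k) w)) C
     = (if j = k then - cl_mult n (witt_f j) w C else 0)
       + cl_mult n (witt_f k) (cl_mult n (witt_fd j) (cl_mult n (witt_f j) w)) C"
    if j: "j \<in> {1..m}" for j
    using cl_mult_scale_right[of n "witt_fd j" "-1" "cl_mult n (witt_f k) (cl_mult n (witt_f j) w)"]
    by (simp add: witt_f_anticomm[OF j k w] witt_fd_f_anticomm[OF j k cl_mult_in_alg])
  have "cl_mult n number_op (cl_mult n (witt_f k) w) C
      = - cl_mult n (witt_f k) w C
        + (\<Sum>j\<in>{1..m}. cl_mult n (witt_f k) (cl_mult n (witt_fd j) (cl_mult n (witt_f j) w)) C)"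
    using k by (simp add: cl_mult_number_op commute sum.distrib sum.delta)
  also have "(\<Sum>j\<in>{1..m}. cl_mult n (witt_f k) (cl_mult n (witt_fd j) (cl_mult n (witt_f j) w)) C)
      = cl_mult n (witt_f k) (cl_mult n number_op w) C"
    unfolding cl_mult_number_op by (simp add: cl_mult_sum_right)
  also have "\<dots> = r * cl_mult n (witt_f k) w C"
    by (simp add: N cl_mult_scale_right)
  finally show "cl_mult n number_op (cl_mult n (witt_f k) w) C = (r - 1) * cl_mult n (witt_f k) w C"
    by (simp add: algebra_simps)
qed

lemma witt_f_annihilates_idem_factors:
  assumes "k \<in> {1..m}" "set js \<subseteq> {1..m}" "k \<in> set js"
  shows "cl_mult n (witt_f k) (foldr (cl_mult n) (map (\<lambda>j. cl_mult n (witt_f j) (witt_fd j)) js) cl_one)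
    = (\<lambda>C. 0)"
  using assms(2,3)
proof (induction js)
  case Nil
  then show ?case by simp
next
  case (Cons j js)
  let ?X = "foldr (cl_mult n) (map (\<lambda>j. cl_mult n (witt_f j) (witt_fd j)) js) cl_one"
  have j: "j \<in> {1..m}" using Cons.prems by auto
  have unfold: "cl_mult n (witt_f k) (foldr (cl_mult n) (map (\<lambda>j. cl_mult n (witt_f j) (witt_fd j)) (j # js)) cl_one)
      = cl_mult n (witt_f k) (cl_mult n (witt_f j) (cl_mult n (witt_fd j) ?X))"
    by (simp add: cl_mult_assoc)
  show ?case
  proof (cases "j = k")
    case True
    then show ?thesis unfolding unfold using witt_f_square[OF assms(1) cl_mult_in_alg] by simp
  next
    case False
    then have "cl_mult n (witt_f k) ?X = (\<lambda>C. 0)" using Cons by auto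
    then have "cl_mult n (witt_f k) (cl_mult n (witt_fd j) ?X) = (\<lambda>C. 0)"
      using False by (simp add: witt_f_fd_anticomm[OF assms(1) j cl_prod_in_alg] cl_mult_zero_right)
    then show ?thesis
      unfolding unfold witt_f_anticomm[OF assms(1) j cl_mult_in_alg] by (simp add: cl_mult_zero_right)
  qed
qed

definition idem :: cl where
  "idem = foldr (cl_mult n) (map (\<lambda>k. cl_mult n (witt_f k) (witt_fd k)) [1..<m+1]) cl_one"

lemma num_eigen_idem: "num_eigen 0 idem"
proof -
  have "cl_mult n (witt_f k) idem = (\<lambda>C. 0)" if "k \<in> {1..m}" for k
    unfolding idem_def using that by (intro witt_f_annihilates_idem_factors) auto
  then show ?thesis
    unfolding num_eigen_def by (simp add: idem_def cl_prod_in_alg cl_mult_number_op cl_mult_zero_right)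
qed

lemma num_eigen_creation_product:
  assumes "set js \<subseteq> {1..m}"
  shows "num_eigen (of_nat (length js)) (cl_mult n (foldr (cl_mult n) (map witt_fd js) cl_one) idem)"
  using assms
proof (induction js)
  case Nil
  then show ?case using num_eigen_idem by (simp add: num_eigen_def cl_mult_one_left)
next
  case (Cons j js)
  then have "num_eigen (of_nat (length js) + 1)
      (cl_mult n (witt_fd j) (cl_mult n (foldr (cl_mult n) (map witt_fd js) cl_one) idem))"
    by (intro num_eigen_witt_fd) auto
  then show ?case by (simp add: cl_mult_assoc add.commute)
qed

lemma num_eigen_lincomb:
  assumes "finite I" "\<And>i. i \<in> I \<Longrightarrow> num_eigen r (u i)"
  shows "num_eigen r (\<lambda>A. \<Sum>i\<in>I. c i * u i A)"
  using assms
  by (auto simp: num_eigen_def cl_mult_lincomb_right sum_distrib_left algebra_simps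
      intro!: cl_lincomb_in_alg sum.cong)

lemma num_eigen_add_scaled:
  assumes "num_eigen r X" "num_eigen r Y"
  shows "num_eigen r (\<lambda>B. X B + c * Y B)" "num_eigen r (\<lambda>B. X B - c * Y B)"
  using assms unfolding num_eigen_def cl_alg_def
  by (auto simp: cl_mult_add_right cl_mult_diff_right cl_mult_scale_right fun_eq_iff algebra_simps)

lemma num_eigen_sum:
  assumes "finite I" "\<And>i. i \<in> I \<Longrightarrow> num_eigen r (u i)"
  shows "num_eigen r (\<lambda>A. \<Sum>i\<in>I. u i A)"
  using num_eigen_lincomb[OF assms, where c = "\<lambda>_. 1"] by simp

lemma num_eigen_zero_if_two_eigenvalues:
  assumes "num_eigen a w" "num_eigen b w" "a \<noteq> b"
  shows "w = (\<lambda>C. 0)"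
proof
  fix C
  have "a * w C = b * w C" using assms(1,2) by (auto simp: num_eigen_def dest: fun_cong)
  then show "w C = 0" using assms(3) by simp
qed

definition lagrange_factor :: "complex \<Rightarrow> complex \<Rightarrow> cl" where
  "lagrange_factor \<mu> x = (\<lambda>A. (1/(\<mu> - x)) * number_op A - (x/(\<mu> - x)) * cl_one A)"

text \<open>The Lagrange interpolation polynomial in \<open>N\<close> that is \<open>1\<close> at \<open>\<mu>\<close> and vanishes at
  the other entries of \<open>L\<close>.\<close>
definition eigen_proj :: "complex \<Rightarrow> complex list \<Rightarrow> cl" where
  "eigen_proj \<mu> L = foldr (cl_mult n) (map (lagrange_factor \<mu>) (filter (\<lambda>x. x \<noteq> \<mu>) L)) cl_one"

lemma cl_mult_lagrange_factors:
  assumes "num_eigen \<nu> w"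
  shows "cl_mult n (foldr (cl_mult n) (map (lagrange_factor \<mu>) xs) cl_one) w
    = (\<lambda>C. (\<Prod>x\<leftarrow>xs. (\<nu> - x)/(\<mu> - x)) * w C)"
proof (induction xs)
  case Nil
  then show ?case using assms by (simp add: num_eigen_def cl_mult_one_left)
next
  case (Cons x xs)
  have w: "w \<in> cl_alg n" and N: "cl_mult n number_op w = (\<lambda>C. \<nu> * w C)"
    using assms by (auto simp: num_eigen_def)
  have factor: "cl_mult n (lagrange_factor \<mu> x) w = (\<lambda>C. ((\<nu> - x)/(\<mu> - x)) * w C)"
    unfolding lagrange_factor_def cl_mult_diff_left cl_mult_scale_left N cl_mult_one_left[OF w]
    by (simp add: fun_eq_iff diff_divide_distrib algebra_simps)
  have "cl_mult n (foldr (cl_mult n) (map (lagrange_factor \<mu>) (x # xs)) cl_one) w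
      = cl_mult n (lagrange_factor \<mu> x) (cl_mult n (foldr (cl_mult n) (map (lagrange_factor \<mu>) xs) cl_one) w)"
    by (simp add: cl_mult_assoc)
  also have "\<dots> = (\<lambda>C. (\<Prod>x\<leftarrow>xs. (\<nu> - x)/(\<mu> - x)) * cl_mult n (lagrange_factor \<mu> x) w C)"
    by (simp only: Cons.IH cl_mult_scale_right)
  finally show ?case by (simp add: factor fun_eq_iff ac_simps)
qed

lemma cl_mult_eigen_proj:
  assumes "num_eigen \<nu> w" "\<nu> \<in> set L"
  shows "cl_mult n (eigen_proj \<mu> L) w = (if \<nu> = \<mu> then w else (\<lambda>C. 0))"
proof (cases "\<nu> = \<mu>")
  case True
  have "(\<Prod>x\<leftarrow>xs. (\<mu> - x)/(\<mu> - x)) = 1" if "\<mu> \<notin> set xs" for xs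
    using that by (induction xs) auto
  then show ?thesis
    unfolding eigen_proj_def cl_mult_lagrange_factors[OF assms(1)] True by simp
next
  case False
  then have "(\<Prod>x\<leftarrow>filter (\<lambda>x. x \<noteq> \<mu>) L. (\<nu> - x)/(\<mu> - x)) = 0"
    using assms(2) by (auto simp: prod_list_zero_iff)
  then show ?thesis using False unfolding eigen_proj_def cl_mult_lagrange_factors[OF assms(1)] by simp
qed

lemma num_eigen_component_by_proj:
  assumes R: "finite R" and inj: "inj_on lam R" and r0: "r0 \<in> R"
  obtains P where "\<And>X. (\<And>r. r \<in> R \<Longrightarrow> num_eigen (lam r) (X r)) \<Longrightarrow>
    cl_mult n P (\<lambda>C. \<Sum>r\<in>R. X r C) = X r0"
proof -
  obtain L where L: "set L = lam ` R" by (meson finite_list finite_imageI R)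
  show thesis
  proof (rule that)
    fix X assume eigen: "\<And>r. r \<in> R \<Longrightarrow> num_eigen (lam r) (X r)"
    have proj: "cl_mult n (eigen_proj (lam r0) L) (X r) C = (if r = r0 then X r C else 0)"
      if r: "r \<in> R" for r C
    proof -
      have "(lam r = lam r0) = (r = r0)" using inj r r0 by (auto dest: inj_onD)
      then show ?thesis using cl_mult_eigen_proj[OF eigen[OF r], of L "lam r0"] L r by simp
    qed
    show "cl_mult n (eigen_proj (lam r0) L) (\<lambda>C. \<Sum>r\<in>R. X r C) = X r0"
    proof
      fix C
      have "cl_mult n (eigen_proj (lam r0) L) (\<lambda>C. \<Sum>r\<in>R. X r C) C
          = (\<Sum>r\<in>R. if r = r0 then X r C else 0)"
        by (simp add: cl_mult_sum_right[OF R] proj cong: sum.cong)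
      also have "\<dots> = X r0 C" using R r0 by (simp add: sum.delta)
      finally show "cl_mult n (eigen_proj (lam r0) L) (\<lambda>C. \<Sum>r\<in>R. X r C) C = X r0 C" .
    qed
  qed
qed

lemma num_eigen_sum_eq_zero:
  assumes "finite R" "inj_on lam R" "\<And>r. r \<in> R \<Longrightarrow> num_eigen (lam r) (X r)"
    and "(\<lambda>C. \<Sum>r\<in>R. X r C) = (\<lambda>C. 0)" "r0 \<in> R"
  shows "X r0 = (\<lambda>C. 0)"
proof -
  obtain P where "cl_mult n P (\<lambda>C. \<Sum>r\<in>R. X r C) = X r0"
    using num_eigen_component_by_proj[OF assms(1,2,5)] assms(3) by metis
  then show ?thesis using assms(4) by (simp add: cl_mult_zero_right)
qed

end

section \<open>Splitting the Dirac operators along the Witt basis\<close>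

lemma sum_pairs: "(\<Sum>\<alpha>\<in>{1..2*(m::nat)}. g \<alpha>) = (\<Sum>k\<in>{1..m}. g (2*k-1) + g (2*k))"
proof (induction m)
  case 0
  then show ?case by simp
next
  case (Suc m)
  have "{1..2 * Suc m} = insert (2*m+2) (insert (2*m+1) {1..2*m})" by auto
  then have "(\<Sum>\<alpha>\<in>{1..2*Suc m}. g \<alpha>) = g (2*m+2) + (g (2*m+1) + (\<Sum>\<alpha>\<in>{1..2*m}. g \<alpha>))"
    by simp
  then show ?case using Suc.IH by (simp add: ac_simps)
qed

lemma gen_eq_witt:
  assumes "1 \<le> k"
  shows "gen (2*k-1) = (\<lambda>A. witt_fd k A - witt_f k A)"
    "gen (2*k) = (\<lambda>A. -\<i> * (witt_f k A + witt_fd k A))"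
  by (auto simp: fun_eq_iff witt_f_def witt_fd_def cl_scale_def cl_add_def algebra_simps)

lemma mapI_pair:
  assumes "1 \<le> k"
  shows "mapI (2*k-1) = gen (2*k)" "mapI (2*k) = (\<lambda>A. -1 * gen (2*k-1) A)"
  using assms by (auto simp: mapI_def cl_scale_def)

lemma difference_and_sum_vanish_iff:
  "((\<lambda>C. a C - b C) = (\<lambda>C. 0) \<and> (\<lambda>C. -\<i> * (a C + b C)) = (\<lambda>C. 0))
    \<longleftrightarrow> a = (\<lambda>C. 0::complex) \<and> b = (\<lambda>C. 0)"
  by (auto simp: fun_eq_iff)

context witt_setting
begin

text \<open>With \<open>D\<^sub>\<alpha>\<close> standing for \<open>\<partial>\<^sub>X\<^sub>\<alpha>G\<close>, these are \<open>\<partial>\<^sup>+G\<close> and \<open>\<partial>\<^sup>-G\<close>.\<close>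
definition creation_part :: "(nat \<Rightarrow> cl) \<Rightarrow> cl" where
  "creation_part D = (\<lambda>C. \<Sum>k\<in>{1..m}. cl_mult n (witt_fd k) (\<lambda>B. D (2*k-1) B - \<i> * D (2*k) B) C)"

definition annihilation_part :: "(nat \<Rightarrow> cl) \<Rightarrow> cl" where
  "annihilation_part D = (\<lambda>C. \<Sum>k\<in>{1..m}. cl_mult n (witt_f k) (\<lambda>B. D (2*k-1) B + \<i> * D (2*k) B) C)"

lemma gen_dirac_split:
  assumes "n = 2*m"
  shows "(\<lambda>C. \<Sum>\<alpha>\<in>{1..n}. cl_mult n (gen \<alpha>) (D \<alpha>) C)
    = (\<lambda>C. creation_part D C - annihilation_part D C)"
proof (rule ext)
  fix C
  have "cl_mult n (gen (2*k-1)) (D (2*k-1)) C + cl_mult n (gen (2*k)) (D (2*k)) C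
      = cl_mult n (witt_fd k) (\<lambda>B. D (2*k-1) B - \<i> * D (2*k) B) C
        - cl_mult n (witt_f k) (\<lambda>B. D (2*k-1) B + \<i> * D (2*k) B) C"
    if k: "1 \<le> k" for k
    unfolding gen_eq_witt[OF k] cl_mult_diff_left cl_mult_scale_left cl_mult_add_left
      cl_mult_diff_right cl_mult_add_right cl_mult_scale_right
    by (simp add: algebra_simps)
  moreover have "(\<Sum>\<alpha>\<in>{1..n}. g \<alpha>) = (\<Sum>k\<in>{1..m}. g (2*k-1) + g (2*k))" for g :: "nat \<Rightarrow> complex"
    using sum_pairs[of g m] assms by simp
  ultimately show "(\<Sum>\<alpha>\<in>{1..n}. cl_mult n (gen \<alpha>) (D \<alpha>) C) = creation_part D C - annihilation_part D C"
    unfolding creation_part_def annihilation_part_def by (simp add: sum_subtractf)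
qed

lemma mapI_dirac_split:
  assumes "n = 2*m"
  shows "(\<lambda>C. \<Sum>\<alpha>\<in>{1..n}. cl_mult n (mapI \<alpha>) (D \<alpha>) C)
    = (\<lambda>C. -\<i> * (creation_part D C + annihilation_part D C))"
proof (rule ext)
  fix C
  have "cl_mult n (mapI (2*k-1)) (D (2*k-1)) C + cl_mult n (mapI (2*k)) (D (2*k)) C
      = -\<i> * (cl_mult n (witt_fd k) (\<lambda>B. D (2*k-1) B - \<i> * D (2*k) B) C
        + cl_mult n (witt_f k) (\<lambda>B. D (2*k-1) B + \<i> * D (2*k) B) C)"
    if k: "1 \<le> k" for k
    unfolding mapI_pair[OF k] gen_eq_witt[OF k] cl_mult_diff_left cl_mult_scale_left
      cl_mult_add_left cl_mult_diff_right cl_mult_add_right cl_mult_scale_right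
    by (simp add: algebra_simps)
  moreover have "(\<Sum>\<alpha>\<in>{1..n}. g \<alpha>) = (\<Sum>k\<in>{1..m}. g (2*k-1) + g (2*k))" for g :: "nat \<Rightarrow> complex"
    using sum_pairs[of g m] assms by simp
  ultimately have "(\<Sum>\<alpha>\<in>{1..n}. cl_mult n (mapI \<alpha>) (D \<alpha>) C)
      = (\<Sum>k\<in>{1..m}. -\<i> * (cl_mult n (witt_fd k) (\<lambda>B. D (2*k-1) B - \<i> * D (2*k) B) C
        + cl_mult n (witt_f k) (\<lambda>B. D (2*k-1) B + \<i> * D (2*k) B) C))"
    by simp
  also have "\<dots> = -\<i> * (creation_part D C + annihilation_part D C)"
    unfolding creation_part_def annihilation_part_def
    by (simp only: mult_minus_left sum_negf sum_distrib_left[symmetric] sum.distrib)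
  finally show "(\<Sum>\<alpha>\<in>{1..n}. cl_mult n (mapI \<alpha>) (D \<alpha>) C) = -\<i> * (creation_part D C + annihilation_part D C)" .
qed

lemma num_eigen_creation_annihilation:
  assumes "\<And>\<beta>. \<beta> \<in> {1..n} \<Longrightarrow> num_eigen r (D \<beta>)"
  shows "num_eigen (r + 1) (creation_part D)" "num_eigen (r - 1) (annihilation_part D)"
proof -
  have "num_eigen r (D (2*k-1))" "num_eigen r (D (2*k))" if "k \<in> {1..m}" for k
  proof -
    have "2*k-1 \<in> {1..n}" "2*k \<in> {1..n}" using that witt_dim by auto
    then show "num_eigen r (D (2*k-1))" "num_eigen r (D (2*k))" by (auto intro: assms)
  qed
  then show "num_eigen (r + 1) (creation_part D)" "num_eigen (r - 1) (annihilation_part D)"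
    unfolding creation_part_def annihilation_part_def
    by (auto intro!: num_eigen_sum num_eigen_witt_fd num_eigen_witt_f num_eigen_add_scaled)
qed

lemma witt_parts_sum:
  assumes "finite R"
  shows "creation_part (\<lambda>\<beta> B. \<Sum>r\<in>R. D r \<beta> B) = (\<lambda>C. \<Sum>r\<in>R. creation_part (D r) C)"
    "annihilation_part (\<lambda>\<beta> B. \<Sum>r\<in>R. D r \<beta> B) = (\<lambda>C. \<Sum>r\<in>R. annihilation_part (D r) C)"
proof -
  have "(\<lambda>B. (\<Sum>r\<in>R. D r (2*k-1) B) - c * (\<Sum>r\<in>R. D r (2*k) B))
      = (\<lambda>B. \<Sum>r\<in>R. D r (2*k-1) B - c * D r (2*k) B)"
    "(\<lambda>B. (\<Sum>r\<in>R. D r (2*k-1) B) + c * (\<Sum>r\<in>R. D r (2*k) B))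
      = (\<lambda>B. \<Sum>r\<in>R. D r (2*k-1) B + c * D r (2*k) B)" for k c
    by (simp_all add: sum_subtractf sum.distrib sum_distrib_left)
  then show "creation_part (\<lambda>\<beta> B. \<Sum>r\<in>R. D r \<beta> B) = (\<lambda>C. \<Sum>r\<in>R. creation_part (D r) C)"
    "annihilation_part (\<lambda>\<beta> B. \<Sum>r\<in>R. D r \<beta> B) = (\<lambda>C. \<Sum>r\<in>R. annihilation_part (D r) C)"
    unfolding creation_part_def annihilation_part_def
    by (simp_all add: cl_mult_sum_right[OF assms] fun_eq_iff sum.swap[of _ R])
qed

text \<open>The two parts have the distinct eigenvalues \<open>r + 1\<close> and \<open>r - 1\<close>.\<close>
lemma witt_parts_difference_vanish_iff:
  assumes "\<And>\<beta>. \<beta> \<in> {1..n} \<Longrightarrow> num_eigen r (D \<beta>)"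
  shows "(\<lambda>C. creation_part D C - annihilation_part D C) = (\<lambda>C. 0)
    \<longleftrightarrow> creation_part D = (\<lambda>C. 0) \<and> annihilation_part D = (\<lambda>C. 0)"
proof
  assume "(\<lambda>C. creation_part D C - annihilation_part D C) = (\<lambda>C. 0)"
  then have "creation_part D = annihilation_part D" by (auto simp: fun_eq_iff dest: fun_cong)
  then have "creation_part D = (\<lambda>C. 0)"
    using num_eigen_creation_annihilation[where D = D and r = r, OF assms]
    by (intro num_eigen_zero_if_two_eigenvalues[of "r + 1" _ "r - 1"]) simp_all
  then show "creation_part D = (\<lambda>C. 0) \<and> annihilation_part D = (\<lambda>C. 0)"
    using \<open>creation_part D = annihilation_part D\<close> by simp
qed simp

lemma witt_parts_sum_vanish_iff:
  assumes "finite R" "\<And>r \<beta>. r \<in> R \<Longrightarrow> \<beta> \<in> {1..n} \<Longrightarrow> num_eigen (of_nat r) (D r \<beta>)"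
  shows "creation_part (\<lambda>\<beta> B. \<Sum>r\<in>R. D r \<beta> B) = (\<lambda>C. 0)
      \<and> annihilation_part (\<lambda>\<beta> B. \<Sum>r\<in>R. D r \<beta> B) = (\<lambda>C. 0)
    \<longleftrightarrow> (\<forall>r\<in>R. creation_part (D r) = (\<lambda>C. 0) \<and> annihilation_part (D r) = (\<lambda>C. 0))"
proof -
  have inj: "inj_on (\<lambda>r. of_nat r + c :: complex) R" for c
    by (auto simp: inj_on_def)
  have eigen: "num_eigen (of_nat r + 1) (creation_part (D r))"
    "num_eigen (of_nat r - 1) (annihilation_part (D r))" if r: "r \<in> R" for r
    using num_eigen_creation_annihilation[where D = "D r" and r = "of_nat r", OF assms(2)[OF r]]
    by simp_all
  have "(\<lambda>C. \<Sum>r\<in>R. creation_part (D r) C) = (\<lambda>C. 0) \<longleftrightarrow> (\<forall>r\<in>R. creation_part (D r) = (\<lambda>C. 0))"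
    using num_eigen_sum_eq_zero[OF assms(1) inj[of 1], where X = "\<lambda>r. creation_part (D r)"] eigen(1)
    by auto
  moreover have "(\<lambda>C. \<Sum>r\<in>R. annihilation_part (D r) C) = (\<lambda>C. 0)
      \<longleftrightarrow> (\<forall>r\<in>R. annihilation_part (D r) = (\<lambda>C. 0))"
    using num_eigen_sum_eq_zero[OF assms(1) inj[of "-1"], where X = "\<lambda>r. annihilation_part (D r)"] eigen(2)
    by auto
  ultimately show ?thesis unfolding witt_parts_sum[OF assms(1)] by blast
qed

end

lemma sum_cl_mult_lincomb_swap:
  "(\<lambda>C. \<Sum>\<alpha>\<in>{1..n}. cl_mult n (\<lambda>A. \<Sum>\<beta>\<in>{1..n}. c \<alpha> \<beta> * M \<beta> A) (D \<alpha>) C)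
   = (\<lambda>C. \<Sum>\<beta>\<in>{1..n}. cl_mult n (M \<beta>) (\<lambda>B. \<Sum>\<alpha>\<in>{1..n}. c \<alpha> \<beta> * D \<alpha> B) C)"
  by (simp add: cl_mult_lincomb_left cl_mult_lincomb_right sum_distrib_left fun_eq_iff)
    (intro allI sum.swap)

lemma mapJ_eq_signed_gen:
  assumes "\<alpha> \<in> {1..4*p}"
  obtains s \<gamma> where "\<gamma> \<in> {1..4*p}" "mapJ \<alpha> = (\<lambda>A. s * gen \<gamma> A)"
proof -
  consider "\<alpha> mod 4 = 1" | "\<alpha> mod 4 = 2" | "\<alpha> mod 4 = 3" | "\<alpha> mod 4 = 0" by arith
  then show thesis
  proof cases
    case 1
    then have "\<alpha> + 2 \<in> {1..4*p}" using assms by (auto; presburger)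
    then show thesis using 1 by (intro that[of "\<alpha> + 2" 1]) (auto simp: mapJ_def)
  next
    case 2
    then have "\<alpha> + 2 \<in> {1..4*p}" using assms by (auto; presburger)
    then show thesis using 2 by (intro that[of "\<alpha> + 2" "-1"]) (auto simp: mapJ_def cl_scale_def)
  next
    case 3
    then have "\<alpha> - 2 \<in> {1..4*p}" using assms by (auto; presburger)
    then show thesis using 3 by (intro that[of "\<alpha> - 2" "-1"]) (auto simp: mapJ_def cl_scale_def)
  next
    case 4
    then have "\<alpha> - 2 \<in> {1..4*p}" using assms by (auto; presburger)
    then show thesis using 4 by (intro that[of "\<alpha> - 2" 1]) (auto simp: mapJ_def)
  qed
qed

lemma mapJ_eq_lincomb:
  assumes "\<alpha> \<in> {1..4*p}"
  shows "mapJ \<alpha> = (\<lambda>A. \<Sum>\<beta>\<in>{1..4*p}. mapJ \<alpha> {\<beta>} * gen \<beta> A)"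
proof -
  obtain s \<gamma> where \<gamma>: "\<gamma> \<in> {1..4*p}" and J: "mapJ \<alpha> = (\<lambda>A. s * gen \<gamma> A)"
    using mapJ_eq_signed_gen[OF assms] .
  have "(\<Sum>\<beta>\<in>{1..4*p}. (s * gen \<gamma> {\<beta>}) * gen \<beta> A)
      = (\<Sum>\<beta>\<in>{1..4*p}. if \<beta> = \<gamma> then s * gen \<beta> A else 0)" for A
    by (intro sum.cong refl) (auto simp: gen_def)
  then have "(\<Sum>\<beta>\<in>{1..4*p}. (s * gen \<gamma> {\<beta>}) * gen \<beta> A) = s * gen \<gamma> A" for A
    using \<gamma> by (simp add: sum.delta)
  then show ?thesis unfolding J by simp
qed

lemma mapK_eq_lincomb: "mapK n \<alpha> = (\<lambda>A. \<Sum>\<beta>\<in>{1..n}. mapJ \<alpha> {\<beta>} * mapI \<beta> A)"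
  by (simp add: mapK_def lin_ext_def)

text \<open>Derivatives along the coordinates rotated by J: the coefficient of \<open>e\<^sub>\<beta>\<close> in
  \<open>J(e\<^sub>\<alpha>)\<close> is \<open>mapJ \<alpha> {\<beta>}\<close>, so \<open>\<partial>\<^sub>J = \<Sum>\<^sub>\<beta> e\<^sub>\<beta> pder_J \<beta>\<close> and
  \<open>\<partial>\<^sub>K = \<Sum>\<^sub>\<beta> I(e\<^sub>\<beta>) pder_J \<beta>\<close>.\<close>
definition pder_J :: "nat \<Rightarrow> (nat \<Rightarrow> 'n::finite) \<Rightarrow> (real^'n \<Rightarrow> cl) \<Rightarrow> real^'n \<Rightarrow> nat \<Rightarrow> cl" where
  "pder_J n idx G x \<beta> = (\<lambda>B. \<Sum>\<alpha>\<in>{1..n}. mapJ \<alpha> {\<beta>} * pder idx G \<alpha> x B)"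

lemma mapJ_dirac_eq_gen_dirac:
  "dirac (4*p) idx mapJ G x = (\<lambda>C. \<Sum>\<beta>\<in>{1..4*p}. cl_mult (4*p) (gen \<beta>) (pder_J (4*p) idx G x \<beta>) C)"
proof -
  have "dirac (4*p) idx mapJ G x = (\<lambda>C. \<Sum>\<alpha>\<in>{1..4*p}.
      cl_mult (4*p) (\<lambda>A. \<Sum>\<beta>\<in>{1..4*p}. mapJ \<alpha> {\<beta>} * gen \<beta> A) (pder idx G \<alpha> x) C)"
    unfolding dirac_def
    by (intro ext sum.cong refl arg_cong[where f = "\<lambda>M. cl_mult (4*p) M _ _"] mapJ_eq_lincomb)
  then show ?thesis unfolding pder_J_def sum_cl_mult_lincomb_swap .
qed

lemma mapK_dirac_eq_mapI_dirac:
  "dirac n idx (mapK n) G x = (\<lambda>C. \<Sum>\<beta>\<in>{1..n}. cl_mult n (mapI \<beta>) (pder_J n idx G x \<beta>) C)"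
  unfolding dirac_def mapK_eq_lincomb pder_J_def by (rule sum_cl_mult_lincomb_swap)

section \<open>Derivatives of Clifford-valued functions\<close>

definition cl_differentiable_at :: "(real^'n \<Rightarrow> cl) \<Rightarrow> real^'n \<Rightarrow> bool" where
  "cl_differentiable_at G x \<longleftrightarrow> (\<forall>A. (\<lambda>y. G y A) differentiable (at x))"

lemma cl_differentiable_at_has_derivative:
  "cl_differentiable_at G x \<Longrightarrow>
    ((\<lambda>y. G y A) has_derivative frechet_derivative (\<lambda>y. G y A) (at x)) (at x)"
  unfolding cl_differentiable_at_def using frechet_derivative_works by blast

lemma pder_cl_mult_left:
  assumes "cl_differentiable_at G x"
  shows "cl_differentiable_at (\<lambda>y. cl_mult n a (G y)) x"
    "pder idx (\<lambda>y. cl_mult n a (G y)) \<alpha> x = cl_mult n a (pder idx G \<alpha> x)"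
proof -
  let ?k = "\<lambda>C A B. if (A - B) \<union> (B - A) = C then blade_sign A B * a A else 0"
  have expand: "cl_mult n a v C = (\<Sum>A\<in>blades n. \<Sum>B\<in>blades n. ?k C A B * v B)" for v C
    unfolding cl_mult_def by (intro sum.cong refl) auto
  have deriv: "((\<lambda>y. cl_mult n a (G y) C) has_derivative
      (\<lambda>h. \<Sum>A\<in>blades n. \<Sum>B\<in>blades n. ?k C A B * frechet_derivative (\<lambda>y. G y B) (at x) h)) (at x)" for C
    unfolding expand using assms
    by (intro has_derivative_sum has_derivative_mult_right cl_differentiable_at_has_derivative)
  then show "cl_differentiable_at (\<lambda>y. cl_mult n a (G y)) x"
    unfolding cl_differentiable_at_def by (auto simp: differentiable_def)
  show "pder idx (\<lambda>y. cl_mult n a (G y)) \<alpha> x = cl_mult n a (pder idx G \<alpha> x)"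
  proof
    fix C
    have "frechet_derivative (\<lambda>y. cl_mult n a (G y) C) (at x) =
        (\<lambda>h. \<Sum>A\<in>blades n. \<Sum>B\<in>blades n. ?k C A B * frechet_derivative (\<lambda>y. G y B) (at x) h)"
      by (rule frechet_derivative_at[OF deriv, symmetric])
    then show "pder idx (\<lambda>y. cl_mult n a (G y)) \<alpha> x C = cl_mult n a (pder idx G \<alpha> x) C"
      unfolding pder_def by (simp only: expand)
  qed
qed

lemma pder_sum:
  assumes "finite R" "\<And>r. r \<in> R \<Longrightarrow> cl_differentiable_at (G r) x"
  shows "pder idx (\<lambda>y A. \<Sum>r\<in>R. G r y A) \<alpha> x = (\<lambda>A. \<Sum>r\<in>R. pder idx (G r) \<alpha> x A)"
proof -
  have deriv: "((\<lambda>y. \<Sum>r\<in>R. G r y A) has_derivative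
      (\<lambda>h. \<Sum>r\<in>R. frechet_derivative (\<lambda>y. G r y A) (at x) h)) (at x)" for A
    using assms(2) by (intro has_derivative_sum cl_differentiable_at_has_derivative)
  show ?thesis unfolding pder_def using frechet_derivative_at[OF deriv] by (auto simp: fun_eq_iff)
qed

lemma pder_scale:
  assumes "cl_differentiable_at G x"
  shows "pder idx (\<lambda>y A. c * G y A) \<alpha> x = (\<lambda>A. c * pder idx G \<alpha> x A)"
proof -
  have deriv: "((\<lambda>y. c * G y A) has_derivative
      (\<lambda>h. c * frechet_derivative (\<lambda>y. G y A) (at x) h)) (at x)" for A
    using assms by (intro has_derivative_mult_right cl_differentiable_at_has_derivative)
  show ?thesis unfolding pder_def using frechet_derivative_at[OF deriv] by (auto simp: fun_eq_iff)
qed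

lemma pder_cong_open:
  assumes "open \<Omega>" "x \<in> \<Omega>" "\<And>y. y \<in> \<Omega> \<Longrightarrow> G y = H y" "cl_differentiable_at H x"
  shows "cl_differentiable_at G x" "pder idx G \<alpha> x = pder idx H \<alpha> x"
proof -
  have deriv: "((\<lambda>y. G y A) has_derivative frechet_derivative (\<lambda>y. H y A) (at x)) (at x)" for A
    using assms
    by (intro has_derivative_transform_within_open[OF cl_differentiable_at_has_derivative]) auto
  then show "cl_differentiable_at G x"
    unfolding cl_differentiable_at_def by (auto simp: differentiable_def)
  show "pder idx G \<alpha> x = pder idx H \<alpha> x"
    unfolding pder_def using frechet_derivative_at[OF deriv] by (auto simp: fun_eq_iff)
qed

lemma pder_in_cl_alg:
  assumes "open \<Omega>" "x \<in> \<Omega>" "\<And>y. y \<in> \<Omega> \<Longrightarrow> G y \<in> cl_alg n"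
  shows "pder idx G \<alpha> x \<in> cl_alg n"
  unfolding cl_alg_def mem_Collect_eq
proof (intro allI impI)
  fix A assume A: "A \<notin> blades n"
  have deriv: "((\<lambda>y. G y A) has_derivative (\<lambda>h. 0)) (at x)"
    by (rule has_derivative_transform_within_open[OF has_derivative_const assms(1,2)])
      (use assms(3) A in \<open>auto simp: cl_alg_def\<close>)
  show "pder idx G \<alpha> x A = 0" unfolding pder_def frechet_derivative_at[OF deriv, symmetric] by simp
qed

context witt_setting
begin

lemma cl_differentiable_at_eigen_component:
  assumes "open \<Omega>" "x \<in> \<Omega>" "finite R" "inj_on lam R" "r \<in> R"
    and "\<And>r y. r \<in> R \<Longrightarrow> y \<in> \<Omega> \<Longrightarrow> num_eigen (lam r) (G r y)"
    and "cl_differentiable_at (\<lambda>y A. \<Sum>r\<in>R. G r y A) x"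
  shows "cl_differentiable_at (G r) x"
proof -
  obtain P where P: "\<And>X. (\<And>r. r \<in> R \<Longrightarrow> num_eigen (lam r) (X r)) \<Longrightarrow>
      cl_mult n P (\<lambda>C. \<Sum>r\<in>R. X r C) = X r"
    using num_eigen_component_by_proj[OF assms(3-5)] by blast
  have component: "G r y = cl_mult n P (\<lambda>A. \<Sum>r\<in>R. G r y A)" if "y \<in> \<Omega>" for y
    using P[of "\<lambda>r. G r y"] assms(6) that by simp
  show ?thesis
    by (rule pder_cong_open(1)[OF assms(1,2) component pder_cl_mult_left(1)[OF assms(7)]])
qed

lemma num_eigen_pder:
  assumes "open \<Omega>" "x \<in> \<Omega>" "cl_differentiable_at G x" "\<And>y. y \<in> \<Omega> \<Longrightarrow> num_eigen r (G y)"
  shows "num_eigen r (pder idx G \<alpha> x)"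
proof -
  have alg: "pder idx G \<alpha> x \<in> cl_alg n"
    by (rule pder_in_cl_alg[OF assms(1,2)]) (use assms(4) in \<open>auto simp: num_eigen_def\<close>)
  have "cl_mult n number_op (pder idx G \<alpha> x) = pder idx (\<lambda>y. cl_mult n number_op (G y)) \<alpha> x"
    by (rule pder_cl_mult_left(2)[OF assms(3), symmetric])
  also have "\<dots> = pder idx (\<lambda>y A. r * G y A) \<alpha> x"
    by (rule pder_cong_open(2)[OF assms(1,2), symmetric])
      (auto intro: pder_cl_mult_left(1)[OF assms(3)] dest: assms(4) simp: num_eigen_def)
  also have "\<dots> = (\<lambda>A. r * pder idx G \<alpha> x A)"
    by (rule pder_scale[OF assms(3)])
  finally show ?thesis using alg by (simp add: num_eigen_def)
qed

end

section \<open>Spinors and the monogenic systems\<close>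

locale spinor_setting =
  fixes p :: nat
begin

sublocale W: witt_setting "4*p" "2*p"
  by unfold_locales simp

lemma idemI_eq_idem: "idemI p = W.idem"
  by (simp add: idemI_def W.idem_def cl_prod_list_def)

lemma spin_basis_num_eigen:
  assumes "J \<subseteq> {1..2*p}"
  shows "W.num_eigen (of_nat (card J)) (spin_basis p J)"
proof -
  have "finite J" using assms finite_subset by blast
  then show ?thesis
    using W.num_eigen_creation_product[of "sorted_list_of_set J"] assms
    by (simp add: spin_basis_def cl_prod_list_def idemI_eq_idem)
qed

lemma spinor_r_num_eigen_and_spinor:
  assumes "v \<in> spinor_r p r"
  shows "W.num_eigen (of_nat r) v" "v \<in> spinor p"
proof -
  let ?JJ = "{J. J \<subseteq> {1..2*p} \<and> card J = r}"
  obtain c where v: "v = (\<lambda>A. \<Sum>J\<in>?JJ. c J * spin_basis p J A)"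
    using assms by (auto simp: spinor_r_def)
  have fin: "finite ?JJ" by (rule finite_subset[of _ "Pow {1..2*p}"]) auto
  show "W.num_eigen (of_nat r) v" unfolding v
    by (rule W.num_eigen_lincomb[OF fin]) (use spin_basis_num_eigen in auto)
  let ?a = "\<lambda>A. \<Sum>J\<in>?JJ. c J * cl_prod_list (4*p) (map witt_fd (sorted_list_of_set J)) A"
  have "?a \<in> cl_alg (4*p)"
    by (rule cl_lincomb_in_alg[OF fin]) (simp add: cl_prod_list_def cl_prod_in_alg)
  moreover have "cl_mult (4*p) ?a (idemI p) = v"
    unfolding v cl_mult_lincomb_left[OF fin] by (simp add: spin_basis_def)
  ultimately show "v \<in> spinor p" unfolding spinor_def by blast
qed

lemma spinor_sum:
  assumes "finite R" "\<And>r. r \<in> R \<Longrightarrow> v r \<in> spinor p"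
  shows "(\<lambda>A. \<Sum>r\<in>R. v r A) \<in> spinor p"
proof -
  have "\<forall>r\<in>R. \<exists>a. a \<in> cl_alg (4*p) \<and> v r = cl_mult (4*p) a (idemI p)"
    using assms(2) by (auto simp: spinor_def)
  then obtain a where a: "\<And>r. r \<in> R \<Longrightarrow> a r \<in> cl_alg (4*p) \<and> v r = cl_mult (4*p) (a r) (idemI p)"
    by metis
  then have "(\<lambda>A. \<Sum>r\<in>R. v r A) = cl_mult (4*p) (\<lambda>A. \<Sum>r\<in>R. a r A) (idemI p)"
    by (simp add: cl_mult_sum_left[OF assms(1)])
  moreover have "(\<lambda>A. \<Sum>r\<in>R. a r A) \<in> cl_alg (4*p)"
    using a by (auto simp: cl_alg_def intro!: sum.neutral)
  ultimately show ?thesis unfolding spinor_def by blast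
qed

lemma dirac_witt_splits:
  "dirac (4*p) idx gen G x = (\<lambda>C. W.creation_part (\<lambda>\<alpha>. pder idx G \<alpha> x) C
      - W.annihilation_part (\<lambda>\<alpha>. pder idx G \<alpha> x) C)"
  "dirac (4*p) idx mapI G x = (\<lambda>C. -\<i> * (W.creation_part (\<lambda>\<alpha>. pder idx G \<alpha> x) C
      + W.annihilation_part (\<lambda>\<alpha>. pder idx G \<alpha> x) C))"
  "dirac (4*p) idx mapJ G x = (\<lambda>C. W.creation_part (pder_J (4*p) idx G x) C
      - W.annihilation_part (pder_J (4*p) idx G x) C)"
  "dirac (4*p) idx (mapK (4*p)) G x = (\<lambda>C. -\<i> * (W.creation_part (pder_J (4*p) idx G x) C
      + W.annihilation_part (pder_J (4*p) idx G x) C))"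
proof -
  have n: "4*p = 2*(2*p)" by simp
  show "dirac (4*p) idx gen G x = (\<lambda>C. W.creation_part (\<lambda>\<alpha>. pder idx G \<alpha> x) C
      - W.annihilation_part (\<lambda>\<alpha>. pder idx G \<alpha> x) C)"
    unfolding dirac_def by (rule W.gen_dirac_split[OF n])
  show "dirac (4*p) idx mapI G x = (\<lambda>C. -\<i> * (W.creation_part (\<lambda>\<alpha>. pder idx G \<alpha> x) C
      + W.annihilation_part (\<lambda>\<alpha>. pder idx G \<alpha> x) C))"
    unfolding dirac_def by (rule W.mapI_dirac_split[OF n])
  show "dirac (4*p) idx mapJ G x = (\<lambda>C. W.creation_part (pder_J (4*p) idx G x) C
      - W.annihilation_part (pder_J (4*p) idx G x) C)"
    unfolding mapJ_dirac_eq_gen_dirac by (rule W.gen_dirac_split[OF n])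
  show "dirac (4*p) idx (mapK (4*p)) G x = (\<lambda>C. -\<i> * (W.creation_part (pder_J (4*p) idx G x) C
      + W.annihilation_part (pder_J (4*p) idx G x) C))"
    unfolding mapK_dirac_eq_mapI_dirac by (rule W.mapI_dirac_split[OF n])
qed

definition witt_derivatives_vanish :: "(nat \<Rightarrow> 'n::finite) \<Rightarrow> (real^'n \<Rightarrow> cl) \<Rightarrow> real^'n \<Rightarrow> bool" where
  "witt_derivatives_vanish idx G x \<longleftrightarrow>
    (\<forall>D \<in> {\<lambda>\<alpha>. pder idx G \<alpha> x, pder_J (4*p) idx G x}.
      W.creation_part D = (\<lambda>C. 0) \<and> W.annihilation_part D = (\<lambda>C. 0))"

lemma q_monogenic_iff_witt_derivatives_vanish:
  assumes "\<And>x. x \<in> \<Omega> \<Longrightarrow> G x \<in> spinor p"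
  shows "q_monogenic p idx \<Omega> G \<longleftrightarrow> (\<forall>x\<in>\<Omega>. witt_derivatives_vanish idx G x)"
proof -
  have "(dirac (4*p) idx gen G x = cl_zero \<and> dirac (4*p) idx mapI G x = cl_zero)
      \<and> (dirac (4*p) idx mapJ G x = cl_zero \<and> dirac (4*p) idx (mapK (4*p)) G x = cl_zero)
    \<longleftrightarrow> witt_derivatives_vanish idx G x" for x
    unfolding dirac_witt_splits cl_zero_def difference_and_sum_vanish_iff
      witt_derivatives_vanish_def by simp
  then show ?thesis using assms unfolding q_monogenic_def M_monogenic_def by blast
qed

lemma gen_mapJ_monogenic_iff_witt_derivatives_vanish:
  assumes "\<And>x \<alpha>. x \<in> \<Omega> \<Longrightarrow> W.num_eigen r (pder idx G \<alpha> x)"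
  shows "M_monogenic (4*p) idx gen \<Omega> G \<and> M_monogenic (4*p) idx mapJ \<Omega> G
    \<longleftrightarrow> (\<forall>x\<in>\<Omega>. witt_derivatives_vanish idx G x)"
proof -
  have "dirac (4*p) idx gen G x = cl_zero \<and> dirac (4*p) idx mapJ G x = cl_zero
    \<longleftrightarrow> witt_derivatives_vanish idx G x" if x: "x \<in> \<Omega>" for x
  proof -
    have "W.num_eigen r (pder_J (4*p) idx G x \<beta>)" for \<beta>
      unfolding pder_J_def by (rule W.num_eigen_lincomb) (auto intro: assms x)
    then show ?thesis
      using W.witt_parts_difference_vanish_iff[where D = "\<lambda>\<alpha>. pder idx G \<alpha> x" and r = r] assms[OF x]
        W.witt_parts_difference_vanish_iff[where D = "pder_J (4*p) idx G x" and r = r]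
      unfolding dirac_witt_splits cl_zero_def witt_derivatives_vanish_def by simp
  qed
  then show ?thesis unfolding M_monogenic_def by blast
qed

lemma witt_derivatives_vanish_sum_iff:
  assumes "finite R" "\<And>\<alpha>. pder idx F \<alpha> x = (\<lambda>A. \<Sum>r\<in>R. pder idx (G r) \<alpha> x A)"
    and "\<And>r \<alpha>. r \<in> R \<Longrightarrow> W.num_eigen (of_nat r) (pder idx (G r) \<alpha> x)"
  shows "witt_derivatives_vanish idx F x \<longleftrightarrow> (\<forall>r\<in>R. witt_derivatives_vanish idx (G r) x)"
proof -
  have "(\<lambda>\<alpha>. pder idx F \<alpha> x) = (\<lambda>\<alpha> B. \<Sum>r\<in>R. pder idx (G r) \<alpha> x B)"
    using assms(2) by simp
  moreover have "pder_J (4*p) idx F x = (\<lambda>\<beta> B. \<Sum>r\<in>R. pder_J (4*p) idx (G r) x \<beta> B)"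
    unfolding pder_J_def assms(2) by (simp add: sum_distrib_left fun_eq_iff) (intro allI sum.swap)
  moreover have "W.num_eigen (of_nat r) (pder_J (4*p) idx (G r) x \<beta>)" if "r \<in> R" for r \<beta>
    unfolding pder_J_def by (rule W.num_eigen_lincomb) (auto intro: assms(3) that)
  ultimately show ?thesis
    using W.witt_parts_sum_vanish_iff[OF assms(1), of "\<lambda>r \<alpha>. pder idx (G r) \<alpha> x"]
      W.witt_parts_sum_vanish_iff[OF assms(1), of "\<lambda>r. pder_J (4*p) idx (G r) x"] assms(3)
    unfolding witt_derivatives_vanish_def by auto
qed


lemma graded_components_pder:
  assumes "open \<Omega>" "x \<in> \<Omega>" "finite R"
    and "\<And>r y. r \<in> R \<Longrightarrow> y \<in> \<Omega> \<Longrightarrow> Fc r y \<in> spinor_r p r"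
    and "\<And>y. y \<in> \<Omega> \<Longrightarrow> cl_differentiable_at (\<lambda>y A. \<Sum>r\<in>R. Fc r y A) y"
  shows "\<And>r \<alpha>. r \<in> R \<Longrightarrow> W.num_eigen (of_nat r) (pder idx (Fc r) \<alpha> x)"
    "\<And>\<alpha>. pder idx (\<lambda>y A. \<Sum>r\<in>R. Fc r y A) \<alpha> x = (\<lambda>A. \<Sum>r\<in>R. pder idx (Fc r) \<alpha> x A)"
proof -
  have eigen: "W.num_eigen (of_nat r) (Fc r y)" if "r \<in> R" "y \<in> \<Omega>" for r y
    using spinor_r_num_eigen_and_spinor(1)[OF assms(4)[OF that]] .
  have "inj_on (of_nat :: nat \<Rightarrow> complex) R" by (auto simp: inj_on_def)
  then have diff: "cl_differentiable_at (Fc r) y" if "r \<in> R" "y \<in> \<Omega>" for r y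
    by (rule W.cl_differentiable_at_eigen_component[OF assms(1) that(2) assms(3) _ that(1) eigen
          assms(5)[OF that(2)]])
  show "W.num_eigen (of_nat r) (pder idx (Fc r) \<alpha> x)" if "r \<in> R" for r \<alpha>
    by (rule W.num_eigen_pder[OF assms(1,2) diff[OF that assms(2)] eigen[OF that]])
  show "pder idx (\<lambda>y A. \<Sum>r\<in>R. Fc r y A) \<alpha> x = (\<lambda>A. \<Sum>r\<in>R. pder idx (Fc r) \<alpha> x A)" for \<alpha>
    by (rule pder_sum[OF assms(3) diff[OF _ assms(2)]])
qed

lemma q_monogenic_graded_sum_iff:
  assumes "open \<Omega>" "finite R"
    and "\<And>r y. r \<in> R \<Longrightarrow> y \<in> \<Omega> \<Longrightarrow> Fc r y \<in> spinor_r p r"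
    and "\<And>y. y \<in> \<Omega> \<Longrightarrow> cl_differentiable_at (\<lambda>y A. \<Sum>r\<in>R. Fc r y A) y"
  shows "q_monogenic p idx \<Omega> (\<lambda>x A. \<Sum>r\<in>R. Fc r x A) \<longleftrightarrow> (\<forall>r\<in>R. q_monogenic p idx \<Omega> (Fc r))"
    "(\<forall>r\<in>R. q_monogenic p idx \<Omega> (Fc r))
      \<longleftrightarrow> (\<forall>r\<in>R. M_monogenic (4*p) idx gen \<Omega> (Fc r) \<and> M_monogenic (4*p) idx mapJ \<Omega> (Fc r))"
proof -
  have pder_eigen: "W.num_eigen (of_nat r) (pder idx (Fc r) \<alpha> x)" if "r \<in> R" "x \<in> \<Omega>" for r \<alpha> x
    by (rule graded_components_pder(1)[OF assms(1) that(2) assms(2-4) that(1)])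
  have pder_of_sum: "pder idx (\<lambda>y A. \<Sum>r\<in>R. Fc r y A) \<alpha> x = (\<lambda>A. \<Sum>r\<in>R. pder idx (Fc r) \<alpha> x A)"
    if "x \<in> \<Omega>" for \<alpha> x
    by (rule graded_components_pder(2)[OF assms(1) that assms(2-4)])
  have spinor: "Fc r y \<in> spinor p" if "r \<in> R" "y \<in> \<Omega>" for r y
    using spinor_r_num_eigen_and_spinor(2)[OF assms(3)[OF that]] .
  have Fc_q: "q_monogenic p idx \<Omega> (Fc r) \<longleftrightarrow> (\<forall>x\<in>\<Omega>. witt_derivatives_vanish idx (Fc r) x)"
    if "r \<in> R" for r
    by (rule q_monogenic_iff_witt_derivatives_vanish[OF spinor[OF that]])
  have "q_monogenic p idx \<Omega> (\<lambda>x A. \<Sum>r\<in>R. Fc r x A)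
      \<longleftrightarrow> (\<forall>x\<in>\<Omega>. witt_derivatives_vanish idx (\<lambda>x A. \<Sum>r\<in>R. Fc r x A) x)"
    by (rule q_monogenic_iff_witt_derivatives_vanish) (rule spinor_sum[OF assms(2) spinor])
  also have "\<dots> \<longleftrightarrow> (\<forall>x\<in>\<Omega>. \<forall>r\<in>R. witt_derivatives_vanish idx (Fc r) x)"
    using witt_derivatives_vanish_sum_iff[OF assms(2) pder_of_sum pder_eigen] by simp
  also have "\<dots> \<longleftrightarrow> (\<forall>r\<in>R. q_monogenic p idx \<Omega> (Fc r))"
    using Fc_q by auto
  finally show "q_monogenic p idx \<Omega> (\<lambda>x A. \<Sum>r\<in>R. Fc r x A) \<longleftrightarrow> (\<forall>r\<in>R. q_monogenic p idx \<Omega> (Fc r))" .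
  have "M_monogenic (4*p) idx gen \<Omega> (Fc r) \<and> M_monogenic (4*p) idx mapJ \<Omega> (Fc r)
      \<longleftrightarrow> (\<forall>x\<in>\<Omega>. witt_derivatives_vanish idx (Fc r) x)" if "r \<in> R" for r
    by (rule gen_mapJ_monogenic_iff_witt_derivatives_vanish[OF pder_eigen[OF that]])
  then show "(\<forall>r\<in>R. q_monogenic p idx \<Omega> (Fc r))
      \<longleftrightarrow> (\<forall>r\<in>R. M_monogenic (4*p) idx gen \<Omega> (Fc r) \<and> M_monogenic (4*p) idx mapJ \<Omega> (Fc r))"
    using Fc_q by simp
qed

end

theorem proposition4:
  fixes p :: nat and idx :: "nat \<Rightarrow> 'n::finite" and \<Omega> :: "(real^'n) set"
    and Fc :: "nat \<Rightarrow> real^'n \<Rightarrow> cl"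
  assumes coords: "bij_betw idx {1..4*p} (UNIV :: 'n set)"
    and region: "open \<Omega>" "connected \<Omega>"
    and comps: "\<forall>r\<le>2*p. \<forall>x\<in>\<Omega>. Fc r x \<in> spinor_r p r"
    and diff: "\<forall>A. (\<lambda>x. \<Sum>r\<le>2*p. Fc r x A) differentiable_on \<Omega>"
  shows "(q_monogenic p idx \<Omega> (\<lambda>x A. \<Sum>r\<le>2*p. Fc r x A)
            \<longleftrightarrow> (\<forall>r\<le>2*p. q_monogenic p idx \<Omega> (Fc r)))
       \<and> ((\<forall>r\<le>2*p. q_monogenic p idx \<Omega> (Fc r))
            \<longleftrightarrow> (\<forall>r\<le>2*p. M_monogenic (4*p) idx gen \<Omega> (Fc r)
                           \<and> M_monogenic (4*p) idx mapJ \<Omega> (Fc r)))"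
proof -
  interpret spinor_setting p .
  have "cl_differentiable_at (\<lambda>y A. \<Sum>r\<in>{..2*p}. Fc r y A) y" if "y \<in> \<Omega>" for y
    using diff region(1) that
    by (simp add: cl_differentiable_at_def differentiable_on_eq_differentiable_at)
  then have "q_monogenic p idx \<Omega> (\<lambda>x A. \<Sum>r\<le>2*p. Fc r x A)
      \<longleftrightarrow> (\<forall>r\<in>{..2*p}. q_monogenic p idx \<Omega> (Fc r))"
    "(\<forall>r\<in>{..2*p}. q_monogenic p idx \<Omega> (Fc r)) \<longleftrightarrow> (\<forall>r\<in>{..2*p}.
      M_monogenic (4*p) idx gen \<Omega> (Fc r) \<and> M_monogenic (4*p) idx mapJ \<Omega> (Fc r))"
    using q_monogenic_graded_sum_iff[OF region(1) finite_atMost] comps by auto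
  then show ?thesis unfolding Ball_def atMost_iff by blast
qed

end
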